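(* Let $\varphi\in\mathrm{Diff}_{up}(\mathbb{C}^{n+1},0)$ and let $\gamma$ be a non-fibered irreducible component of $\mathrm{Fix}\,\varphi$. Then $Res_\gamma(\varphi)$ is a meromorphic function on $\gamma$, i.e. there are $A,B\in\mathbb{C}\{x,x_1,\dots,x_n\}$ with $B\not\equiv0$ on $\gamma$ such that $Res_\gamma(\varphi)=(A/B)|_\gamma$ wherever both are defined.
   Context: Coordinates $(x,x_1,\dots,x_n)$ on $\mathbb{C}^{n+1}$. $\mathrm{Diff}_{up}(\mathbb{C}^{n+1},0)$: germs of biholomorphisms $\varphi$ of $(\mathbb{C}^{n+1},0)$ with $x_j\circ\varphi=x_j$ ($1\le j\le n$) and $\frac{\partial(x\circ\varphi)}{\partial x}(0)=1$; $\mathrm{Fix}\,\varphi=\{x\circ\varphi=x\}$. An analytic germ is fibered if it is a union of local orbits of $\partial/\partial x$. For a fixed point $P$ near $0$, $\varphi_P$ is the germ at $x(P)$ of the one-variable map $t\mapsto x\circ\varphi(t,x_1(P),\dots,x_n(P))$. If $\partial(x\circ\varphi)/\partial x\equiv1$ on $\gamma$ (unipotent component): let $\nu_0$ be the minimum over $P\in\gamma$ of the order at $x(P)$ of $\varphi_P(t)-t$; for $P\in\gamma$ realizing $\nu_0$, $Res_\gamma(\varphi)(P)$ is the residue at $x(P)$ of the meromorphic 1-form $\omega$ with $\omega(X)=1$, where $X$ is any germ of holomorphic vector field formally conjugate to $\log\varphi_P$ (the unique formal nilpotent vector field whose time-one flow is $\varphi_P$); this is defined on the complement in $\gamma$ of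 a proper analytic subset. If $\gamma$ is not unipotent: $Res_\gamma(\varphi)(Q)=1/\ln\left(\frac{\partial(x\circ\varphi)}{\partial x}(Q)\right)$ for $Q\in\gamma$, with the branch of $\ln$ satisfying $\ln1=0$. *)

theory Defs
  imports "HOL-Complex_Analysis.Complex_Analysis"
          "HOL-Computational_Algebra.Formal_Power_Series"
          "HOL-Library.Extended_Nat"
begin

text \<open>Points of C^(n+1) are pairs (x, (x_1,...,x_n)) :: complex \<times> (complex^'n).
  A germ of phi in Diff_up is phi(x,y) = (g(x,y), y) with g holomorphic near 0,
  g 0 = 0 and dg/dx (0) = 1 (it is then automatically a local biholomorphism).\<close>

definition cscale :: "complex \<Rightarrow> complex \<times> (complex^'n) \<Rightarrow> complex \<times> (complex^'n)" where
  "cscale c p = (c * fst p, \<chi> i. c * (snd p $ i))"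

definition cholo_on :: "(complex \<times> (complex^'n)) set \<Rightarrow> (complex \<times> (complex^'n) \<Rightarrow> complex) \<Rightarrow> bool" where
  "cholo_on S f \<longleftrightarrow> open S \<and> (\<forall>p\<in>S. \<exists>L. (f has_derivative L) (at p) \<and>
       (\<forall>c v. L (cscale c v) = c * L v))"

definition partial_x :: "(complex \<times> (complex^'n) \<Rightarrow> complex) \<Rightarrow> complex \<times> (complex^'n) \<Rightarrow> complex" where
  "partial_x g P = deriv (\<lambda>t. g (t, snd P)) (fst P)"

definition germ_sub :: "(complex \<times> (complex^'n)) set \<Rightarrow> (complex \<times> (complex^'n)) set \<Rightarrow> bool" where
  "germ_sub A B \<longleftrightarrow> (\<exists>e>0. A \<inter> ball 0 e \<subseteq> B)"

definition germ_eq :: "(complex \<times> (complex^'n)) set \<Rightarrow> (complex \<times> (complex^'n)) set \<Rightarrow> bool" where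
  "germ_eq A B \<longleftrightarrow> germ_sub A B \<and> germ_sub B A"

definition analytic_germ :: "(complex \<times> (complex^'n)) set \<Rightarrow> bool" where
  "analytic_germ A \<longleftrightarrow> (\<exists>e>0. \<exists>F. finite F \<and> (\<forall>f\<in>F. cholo_on (ball 0 e) f) \<and>
       A \<inter> ball 0 e = {p\<in>ball 0 e. \<forall>f\<in>F. f p = 0})"

definition irreducible_germ :: "(complex \<times> (complex^'n)) set \<Rightarrow> bool" where
  "irreducible_germ A \<longleftrightarrow> analytic_germ A \<and> 0 \<in> A \<and>
     (\<forall>B C. analytic_germ B \<longrightarrow> analytic_germ C \<longrightarrow> germ_eq A (B \<union> C) \<longrightarrow>
        germ_eq A B \<or> germ_eq A C)"

definition irreducible_component_germ ::
  "(complex \<times> (complex^'n)) set \<Rightarrow> (complex \<times> (complex^'n)) set \<Rightarrow> bool" where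
  "irreducible_component_germ \<gamma> Z \<longleftrightarrow> irreducible_germ \<gamma> \<and> germ_sub \<gamma> Z \<and>
     (\<forall>\<delta>. irreducible_germ \<delta> \<longrightarrow> germ_sub \<gamma> \<delta> \<longrightarrow> germ_sub \<delta> Z \<longrightarrow> germ_eq \<delta> \<gamma>)"

text \<open>Fibered: union of local orbits of d/dx (in a small ball, the local orbit
  through p is the vertical disc through p).\<close>
definition fibered_germ :: "(complex \<times> (complex^'n)) set \<Rightarrow> bool" where
  "fibered_germ A \<longleftrightarrow> (\<exists>e>0. \<forall>p\<in>A \<inter> ball 0 e. \<forall>t. (t, snd p) \<in> ball 0 e \<longrightarrow> (t, snd p) \<in> A)"

definition ordat :: "(complex \<Rightarrow> complex) \<Rightarrow> complex \<Rightarrow> enat" where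
  "ordat h t0 = (if \<exists>k. (deriv ^^ k) h t0 \<noteq> 0
                 then enat (LEAST k. (deriv ^^ k) h t0 \<noteq> 0) else \<infinity>)"

definition taylor_fps :: "(complex \<Rightarrow> complex) \<Rightarrow> complex \<Rightarrow> complex fps" where
  "taylor_fps h t0 = Abs_fps (\<lambda>k. (deriv ^^ k) h t0 / fact k)"

text \<open>Formal time-one flow of a formal vector field L(s) d/ds with L of order \<ge> 2
  (Lie series of the coordinate s).\<close>
definition flow1 :: "complex fps \<Rightarrow> complex fps" where
  "flow1 L = Abs_fps (\<lambda>m. \<Sum>k\<le>m. fps_nth (((\<lambda>p. L * fps_deriv p) ^^ k) fps_X) m / fact k)"

definition nu :: "(complex \<times> (complex^'n) \<Rightarrow> complex) \<Rightarrow> complex \<times> (complex^'n) \<Rightarrow> enat" where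
  "nu g P = ordat (\<lambda>t. g (t, snd P) - t) (fst P)"

definition nu0 :: "(complex \<times> (complex^'n) \<Rightarrow> complex) \<Rightarrow> (complex \<times> (complex^'n)) set \<Rightarrow> enat" where
  "nu0 g \<gamma> = (SUP d\<in>{0<..}. INF P\<in>\<gamma> \<inter> ball 0 d. nu g P)"

definition unipotent_comp :: "(complex \<times> (complex^'n) \<Rightarrow> complex) \<Rightarrow> (complex \<times> (complex^'n)) set \<Rightarrow> bool" where
  "unipotent_comp g \<gamma> \<longleftrightarrow> (\<exists>e>0. \<forall>Q\<in>\<gamma> \<inter> ball 0 e. partial_x g Q = 1)"

text \<open>unip_res g gamma P rho: P realizes nu0 and rho is the residue at x(P) of the form
  omega with omega(X) = 1, for a holomorphic vector field X = f(t) d/dt near x(P)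
  formally conjugate (by a formal diffeomorphism h) to log phi_P, the formal
  nilpotent vector field L whose time-one flow is phi_P (all in the coordinate s = t - x(P)).\<close>
definition unip_res :: "(complex \<times> (complex^'n) \<Rightarrow> complex) \<Rightarrow> (complex \<times> (complex^'n)) set
      \<Rightarrow> complex \<times> (complex^'n) \<Rightarrow> complex \<Rightarrow> bool" where
  "unip_res g \<gamma> P \<rho> \<longleftrightarrow> nu g P = nu0 g \<gamma> \<and> nu g P \<noteq> \<infinity> \<and>
     (\<exists>f \<epsilon> L h. \<epsilon> > 0 \<and> f holomorphic_on ball (fst P) \<epsilon> \<and>
        fps_nth L 0 = 0 \<and> fps_nth L 1 = 0 \<and>
        flow1 L = taylor_fps (\<lambda>s. g (fst P + s, snd P) - fst P) 0 \<and>
        fps_nth h 0 = 0 \<and> fps_nth h 1 \<noteq> 0 \<and>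
        fps_compose L h = fps_deriv h * taylor_fps (\<lambda>s. f (fst P + s)) 0 \<and>
        \<rho> = residue (\<lambda>t. 1 / f t) (fst P))"

definition Res_rel :: "(complex \<times> (complex^'n) \<Rightarrow> complex) \<Rightarrow> (complex \<times> (complex^'n)) set
      \<Rightarrow> complex \<times> (complex^'n) \<Rightarrow> complex \<Rightarrow> bool" where
  "Res_rel g \<gamma> P \<rho> \<longleftrightarrow>
     (if unipotent_comp g \<gamma> then unip_res g \<gamma> P \<rho>
      else partial_x g P \<noteq> 1 \<and> \<rho> = 1 / Ln (partial_x g P))"

end

(*
  If dg/dx is not identically 1 on gamma, then Res = 1/Ln(dg/dx) near 0, and
  dg/dx is holomorphic with dg/dx(0) = 1, so Ln(dg/dx) is holomorphic near 0 and vanishes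
  exactly where dg/dx = 1.

  In the unipotent case let nu = nu0 and let P realise nu. In the coordinate s = t - x(P),
  phi_P(s) = s + a_nu s^nu + a_(nu+1) s^(nu+1) + ... with a_j = (1/j!) d^j g/dx^j (P).
  The generator L(s) d/ds of phi_P has order nu, and its coefficients L_nu, ..., L_(2nu-1)
  are a_nu, ..., a_(2nu-2) and a_(2nu-1) - nu a_nu^2/2. The residue of dt/X is invariant
  under formal conjugation, so it is the coefficient of s^(nu-1) in s^nu/L(s): a polynomial
  in L_nu, ..., L_(2nu-1) divided by L_nu^nu. Each a_j is holomorphic in P, because partial
  derivatives of holomorphic functions of several variables are holomorphic (Cauchy's
  formula in x, with estimates uniform in the other variables), and a_nu does not vanish
  at the points realising nu0, which accumulate at 0.
*)

theory Submission
  imports Defs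
begin

section \<open>Holomorphic functions of several variables\<close>

lemma cscale_1_0: "cscale c (1, 0) = (c, 0)"
  by (simp add: cscale_def vec_eq_iff)

lemma cscale_0_vec: "cscale c (0, v) = (0, \<chi> i. c * v $ i)"
  by (simp add: cscale_def)

lemma norm_vec_cmult: "norm (\<chi> i. (c::complex) * v $ i) = cmod c * norm (v::complex^'n)"
  by (simp add: norm_vec_def norm_mult L2_set_right_distrib)

lemma cholo_on_open: "cholo_on S f \<Longrightarrow> open S"
  unfolding cholo_on_def by blast

lemma cholo_onD:
  "cholo_on S f \<Longrightarrow> P \<in> S \<Longrightarrow> \<exists>L. (f has_derivative L) (at P) \<and> (\<forall>c v. L (cscale c v) = c * L v)"
  unfolding cholo_on_def by blast

lemma cholo_on_obtain_derivative:
  assumes "cholo_on S f"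
  obtains f' where "\<And>P. P \<in> S \<Longrightarrow> (f has_derivative f' P) (at P)"
    and "\<And>P c v. P \<in> S \<Longrightarrow> f' P (cscale c v) = c * f' P v"
  using cholo_onD[OF assms] by metis

lemma cholo_on_imp_continuous_on: "cholo_on S f \<Longrightarrow> continuous_on S f"
  by (metis cholo_onD continuous_at_imp_continuous_on has_derivative_continuous)

lemma cholo_on_subset: "cholo_on S f \<Longrightarrow> open T \<Longrightarrow> T \<subseteq> S \<Longrightarrow> cholo_on T f"
  unfolding cholo_on_def by blast

lemma cholo_on_const: "open S \<Longrightarrow> cholo_on S (\<lambda>_. c)"
  unfolding cholo_on_def by (auto intro!: exI[of _ "\<lambda>_. 0"] derivative_eq_intros)

lemma cholo_on_add:
  assumes "cholo_on S f" "cholo_on S g"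
  shows "cholo_on S (\<lambda>P. f P + g P)"
  unfolding cholo_on_def
proof (intro conjI ballI)
  show "open S" using assms cholo_on_open by blast
  fix P assume "P \<in> S"
  then obtain Lf Lg where "(f has_derivative Lf) (at P)" "\<forall>c v. Lf (cscale c v) = c * Lf v"
    and "(g has_derivative Lg) (at P)" "\<forall>c v. Lg (cscale c v) = c * Lg v"
    using cholo_onD assms by metis
  then show "\<exists>L. ((\<lambda>P. f P + g P) has_derivative L) (at P) \<and> (\<forall>c v. L (cscale c v) = c * L v)"
    by (intro exI[of _ "\<lambda>k. Lf k + Lg k"]) (auto intro: has_derivative_add simp: algebra_simps)
qed

lemma cholo_on_mult:
  assumes "cholo_on S f" "cholo_on S g"
  shows "cholo_on S (\<lambda>P. f P * g P)"
  unfolding cholo_on_def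
proof (intro conjI ballI)
  show "open S" using assms cholo_on_open by blast
  fix P assume "P \<in> S"
  then obtain Lf Lg where "(f has_derivative Lf) (at P)" "\<forall>c v. Lf (cscale c v) = c * Lf v"
    and "(g has_derivative Lg) (at P)" "\<forall>c v. Lg (cscale c v) = c * Lg v"
    using cholo_onD assms by metis
  then show "\<exists>L. ((\<lambda>P. f P * g P) has_derivative L) (at P) \<and> (\<forall>c v. L (cscale c v) = c * L v)"
    by (intro exI[of _ "\<lambda>k. f P * Lg k + Lf k * g P"] conjI has_derivative_mult) (auto simp: algebra_simps)
qed

lemma cholo_on_compose_holomorphic:
  assumes "cholo_on S f" "h holomorphic_on T" "open T" "\<And>P. P \<in> S \<Longrightarrow> f P \<in> T"
  shows "cholo_on S (\<lambda>P. h (f P))"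
  unfolding cholo_on_def
proof (intro conjI ballI)
  show "open S" using assms cholo_on_open by blast
  fix P assume P: "P \<in> S"
  then obtain Lf where Lf: "(f has_derivative Lf) (at P)" "\<forall>c v. Lf (cscale c v) = c * Lf v"
    using cholo_onD assms(1) by metis
  have "(h has_derivative (*) (deriv h (f P))) (at (f P))"
    using holomorphic_derivI[OF assms(2,3) assms(4)[OF P]] by (simp add: has_field_derivative_def)
  from has_derivative_compose[OF Lf(1) this]
  show "\<exists>L. ((\<lambda>P. h (f P)) has_derivative L) (at P) \<and> (\<forall>c v. L (cscale c v) = c * L v)"
    using Lf(2) by (intro exI[of _ "\<lambda>k. deriv h (f P) * Lf k"]) (auto simp: algebra_simps)
qed

lemma cholo_on_uminus:
  assumes "cholo_on S f" shows "cholo_on S (\<lambda>P. - f P)"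
  using cholo_on_mult[OF cholo_on_const[OF cholo_on_open[OF assms]] assms, of "-1"] by simp

lemma cholo_on_diff: "cholo_on S f \<Longrightarrow> cholo_on S g \<Longrightarrow> cholo_on S (\<lambda>P. f P - g P)"
  using cholo_on_add[OF _ cholo_on_uminus, of S f g] by simp

lemma cholo_on_power: "cholo_on S f \<Longrightarrow> cholo_on S (\<lambda>P. f P ^ n)"
  by (induction n) (auto intro: cholo_on_mult cholo_on_const cholo_on_open)

lemma cholo_on_sum:
  "finite I \<Longrightarrow> open S \<Longrightarrow> (\<And>i. i \<in> I \<Longrightarrow> cholo_on S (f i)) \<Longrightarrow> cholo_on S (\<lambda>P. \<Sum>i\<in>I. f i P)"
  by (induction I rule: finite_induct) (auto intro: cholo_on_add cholo_on_const)

lemma has_field_derivative_fst_slice: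
  assumes "(f has_derivative L) (at (t, y))" "\<forall>c v. L (cscale c v) = c * L v"
  shows "((\<lambda>s. f (s, y)) has_field_derivative L (1, 0)) (at t)"
proof -
  have "((\<lambda>s. (s, y)) has_derivative (\<lambda>h. (h, 0))) (at t)"
    by (auto intro!: derivative_eq_intros)
  from has_derivative_compose[OF this assms(1)]
  have "((\<lambda>s. f (s, y)) has_derivative (\<lambda>h. L (h, 0))) (at t)" by (simp add: o_def)
  moreover have "(\<lambda>h. L (h, 0)) = (\<lambda>h. h * L (1, 0))"
    using assms(2) cscale_1_0 by metis
  ultimately show ?thesis by (simp add: has_field_derivative_def mult_commute_abs)
qed

lemma has_field_derivative_snd_line:
  fixes v :: "complex^'n"
  assumes "(f has_derivative L) (at (t, y + (\<chi> i. z * v $ i)))" "\<forall>c v. L (cscale c v) = c * L v"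
  shows "((\<lambda>s. f (t, y + (\<chi> i. s * v $ i))) has_field_derivative L (0, v)) (at z)"
proof -
  have "linear (\<lambda>s::complex. \<chi> i. s * v $ i)"
    by (rule linearI) (auto simp: vec_eq_iff algebra_simps)
  then have "((\<lambda>s. (t, y + (\<chi> i. s * v $ i))) has_derivative (\<lambda>h. (0, \<chi> i. h * v $ i))) (at z)"
    by (auto intro!: derivative_eq_intros linear_imp_has_derivative)
  from has_derivative_compose[OF this assms(1)]
  have "((\<lambda>s. f (t, y + (\<chi> i. s * v $ i))) has_derivative (\<lambda>h. L (0, \<chi> i. h * v $ i))) (at z)"
    by (simp add: o_def)
  moreover have "(\<lambda>h. L (0, \<chi> i. h * v $ i)) = (\<lambda>h. h * L (0, v))"
    using assms(2) cscale_0_vec by metis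
  ultimately show ?thesis by (simp add: has_field_derivative_def mult_commute_abs)
qed

lemma holomorphic_on_fst_slice:
  assumes "cholo_on S f" "p \<in> S"
  obtains \<epsilon> where "\<epsilon> > 0" "(\<lambda>t. f (t, snd p)) holomorphic_on ball (fst p) \<epsilon>"
proof -
  obtain \<epsilon> where \<epsilon>: "\<epsilon> > 0" "ball p \<epsilon> \<subseteq> S"
    using cholo_on_open[OF assms(1)] assms(2) open_contains_ball by blast
  have "\<exists>f'. ((\<lambda>t. f (t, snd p)) has_field_derivative f') (at t)" if "t \<in> ball (fst p) \<epsilon>" for t
  proof -
    have "dist p (t, snd p) = dist (fst p) t"
      by (cases p) (simp add: dist_Pair_Pair)
    then have "(t, snd p) \<in> S" using that \<epsilon> by auto
    then show ?thesis
      using cholo_onD[OF assms(1)] has_field_derivative_fst_slice by blast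
  qed
  then have "(\<lambda>t. f (t, snd p)) holomorphic_on ball (fst p) \<epsilon>"
    by (subst holomorphic_on_open) auto
  with \<epsilon> that show ?thesis by blast
qed

section \<open>Holomorphy of the partial derivative in \<open>x\<close>\<close>

lemma holomorphic_deriv_bound_ball:
  fixes \<phi> :: "complex \<Rightarrow> complex"
  assumes hol: "\<phi> holomorphic_on ball 0 R" and R: "R > 0"
    and bd: "\<And>z. z \<in> ball 0 R \<Longrightarrow> cmod (\<phi> z) \<le> M"
  shows "cmod (deriv \<phi> 0) \<le> 2*(M+1)/R"
proof -
  have sub: "cball 0 (R/2) \<subseteq> ball (0::complex) R" using R by auto
  have "cmod ((deriv ^^ 1) \<phi> 0) \<le> fact 1 * (M+1) / (R/2)^1"
  proof (rule Cauchy_higher_deriv_bound)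
    show "\<phi> holomorphic_on ball 0 (R/2)" using hol sub ball_subset_cball holomorphic_on_subset by blast
    show "continuous_on (cball 0 (R/2)) \<phi>"
      using holomorphic_on_imp_continuous_on[OF hol] sub continuous_on_subset by blast
    show "\<phi> w \<in> ball 0 (M+1)" if "w \<in> ball 0 (R/2)" for w
    proof -
      have "cmod (\<phi> w) \<le> M" using bd sub that ball_subset_cball by blast
      then show ?thesis by (simp add: dist_norm)
    qed
  qed (use R in auto)
  then show ?thesis by (simp add: algebra_simps)
qed

lemma holomorphic_quadratic_remainder_bound:
  fixes \<phi> :: "complex \<Rightarrow> complex"
  assumes hol: "\<phi> holomorphic_on ball 0 R" and R: "R > 0"
    and bd: "\<And>z. z \<in> ball 0 R \<Longrightarrow> cmod (\<phi> z) \<le> M" and z: "cmod z \<le> R/4"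
  shows "cmod (\<phi> z - \<phi> 0 - deriv \<phi> 0 * z) \<le> 8*(M+1)/R^2 * (cmod z)^2"
proof -
  define S where "S = cball (0::complex) (R/4)"
  have hd: "((deriv ^^ i) \<phi> has_field_derivative (deriv ^^ Suc i) \<phi> x) (at x within S)"
    if "x \<in> S" for i x
  proof -
    have "x \<in> ball 0 R" using that R by (auto simp: S_def)
    moreover have "(deriv ^^ i) \<phi> holomorphic_on ball 0 R"
      by (rule holomorphic_higher_deriv[OF hol]) auto
    ultimately show ?thesis
      by (auto intro: holomorphic_derivI)
  qed
  have B: "cmod ((deriv ^^ Suc 1) \<phi> x) \<le> 8*(M+1)/R^2" if "x \<in> S" for x
  proof -
    have sub: "cball x (R/2) \<subseteq> ball 0 R"
    proof
      fix w assume "w \<in> cball x (R/2)"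
      then have "cmod w \<le> cmod x + R/2"
        by (metis dist_0_norm dist_triangle mem_cball order_trans add_le_cancel_left dist_commute)
      then show "w \<in> ball 0 R" using that R by (auto simp: S_def)
    qed
    have "cmod ((deriv ^^ 2) \<phi> x) \<le> fact 2 * (M+1) / (R/2)^2"
    proof (rule Cauchy_higher_deriv_bound)
      show "\<phi> holomorphic_on ball x (R/2)" using hol sub ball_subset_cball holomorphic_on_subset by blast
      show "continuous_on (cball x (R/2)) \<phi>"
        using holomorphic_on_imp_continuous_on[OF hol] sub continuous_on_subset by blast
      show "\<phi> w \<in> ball 0 (M+1)" if "w \<in> ball x (R/2)" for w
      proof -
        have "cmod (\<phi> w) \<le> M" using bd sub that ball_subset_cball by blast
        then show ?thesis by (simp add: dist_norm)
      qed
    qed (use R in auto)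
    also have "\<dots> = 8*(M+1)/R^2" by (simp add: power2_eq_square field_simps)
    finally show ?thesis by (simp add: numeral_2_eq_2)
  qed
  have "cmod ((deriv ^^ 0) \<phi> z - (\<Sum>i\<le>1. (deriv ^^ i) \<phi> 0 * (z - 0) ^ i / fact i))
        \<le> 8*(M+1)/R^2 * cmod (z - 0) ^ Suc 1 / fact 1"
    by (rule complex_Taylor[where f="\<lambda>i. (deriv ^^ i) \<phi>" and S=S])
       (use hd B z R in \<open>auto simp: S_def\<close>)
  then show ?thesis by (simp add: power2_eq_square diff_diff_eq)
qed

lemma inverse_square_shift_bounds:
  fixes a u :: complex
  assumes a: "cmod a = 2*\<delta>" and u: "cmod u \<le> \<delta>/2" and \<delta>: "\<delta> > 0"
  shows "cmod (1/(a-u)^2) \<le> 1/\<delta>^2" and "cmod (1/(a-u)^2 - 1/a^2) \<le> 2*cmod u/\<delta>^3"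
proof -
  have au: "cmod (a - u) \<ge> \<delta>"
    using norm_triangle_ineq2[of a u] assms by linarith
  then show "cmod (1/(a-u)^2) \<le> 1/\<delta>^2"
    using \<delta> by (simp add: norm_divide norm_power divide_le_cancel power_mono frac_le)
  have "a \<noteq> 0" "a - u \<noteq> 0" using a au \<delta> by auto
  then have "1/(a-u)^2 - 1/a^2 = (a^2 - (a-u)^2) / ((a-u)^2 * a^2)"
    by (simp add: diff_frac_eq)
  also have "a^2 - (a-u)^2 = u * (2*a - u)" by (simp add: power2_eq_square algebra_simps)
  finally have eq: "1/(a-u)^2 - 1/a^2 = u * (2*a - u) / ((a-u)^2 * a^2)" .
  have n1: "cmod (2*a - u) \<le> 5*\<delta>"
    using norm_triangle_ineq4[of "2*a" u] assms by (simp add: norm_mult)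
  have n2: "cmod ((a-u)^2 * a^2) \<ge> \<delta>^2 * (4*\<delta>^2)"
    unfolding norm_mult norm_power using assms au
    by (intro mult_mono power_mono) (auto simp: power2_eq_square)
  have "cmod (1/(a-u)^2 - 1/a^2) = cmod u * cmod (2*a - u) / cmod ((a-u)^2 * a^2)"
    unfolding eq by (simp add: norm_mult norm_divide)
  also have "\<dots> \<le> cmod u * (5*\<delta>) / (\<delta>^2 * (4*\<delta>^2))"
    using n1 n2 \<delta> by (intro frac_le mult_left_mono) auto
  also have "\<dots> \<le> 2*cmod u/\<delta>^3"
    using \<delta> by (simp add: field_simps power2_eq_square power3_eq_cube)
  finally show "cmod (1/(a-u)^2 - 1/a^2) \<le> 2*cmod u/\<delta>^3" .
qed

lemma eventually_at_right_0_small: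
  fixes C e :: real
  assumes "e > 0"
  shows "\<forall>\<^sub>F s in at_right 0. 0 < s \<and> s * C < e"
proof -
  have "((\<lambda>s. s * C) \<longlongrightarrow> 0 * C) (at_right (0::real))"
    by (intro tendsto_mult tendsto_ident_at tendsto_const)
  then show ?thesis
    using assms by (auto intro!: eventually_conj eventually_at_right_less order_tendstoD(2))
qed

lemma norm_2pi_i_mult_le_iff: "cmod (2*pi*\<i> * z) \<le> 2*pi * B \<longleftrightarrow> cmod z \<le> B"
  by (simp add: norm_mult)

lemma has_derivative_at_quadratic_remainder:
  fixes f :: "'a::real_normed_vector \<Rightarrow> 'b::real_normed_vector"
  assumes "bounded_linear D" "e > 0"
    and "\<And>k. norm k < e \<Longrightarrow> norm (f (x + k) - f x - D k) \<le> C * (norm k)^2"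
  shows "(f has_derivative D) (at x)"
  unfolding has_derivative_at
proof (intro conjI assms(1))
  show "((\<lambda>k. norm (f (x + k) - f x - D k) / norm k) \<longlongrightarrow> 0) (at 0)"
  proof (rule Lim_null_comparison)
    show "\<forall>\<^sub>F k in at 0. norm (norm (f (x + k) - f x - D k) / norm k) \<le> C * norm k"
      unfolding eventually_at
    proof (intro exI conjI ballI impI)
      fix k :: 'a assume "k \<noteq> 0 \<and> dist k 0 < e"
      then have k: "norm k > 0" "norm k < e" by auto
      then have "norm (f (x + k) - f x - D k) / norm k \<le> C * (norm k)^2 / norm k"
        using assms(3) by (intro divide_right_mono) auto
      also have "\<dots> = C * norm k"
        using k by (simp add: power2_eq_square)
      finally show "norm (norm (f (x + k) - f x - D k) / norm k) \<le> C * norm k"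
        by simp
    qed (rule assms(2))
    show "((\<lambda>k. C * norm k) \<longlongrightarrow> 0) (at 0)"
      using tendsto_mult_left[OF tendsto_norm_zero[OF tendsto_ident_at[of 0 UNIV]], of C] by simp
  qed
qed

lemma unit_direction:
  fixes w :: "complex^'n"
  obtains v where "norm v = 1" "w = (\<chi> i. complex_of_real (norm w) * v $ i)"
proof (cases "w = 0")
  case True
  then show ?thesis using that[of "axis undefined 1"] by (simp add: vec_eq_iff)
next
  case False
  show ?thesis
  proof (rule that)
    show "norm ((1 / norm w) *\<^sub>R w) = 1" using False by simp
    show "w = (\<chi> i. complex_of_real (norm w) * ((1 / norm w) *\<^sub>R w) $ i)"
      using False by (simp add: vec_eq_iff vector_scaleR_component scaleR_conv_of_real[where 'a=complex])
  qed
qed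

text \<open>The derivative of \<open>\<partial>G/\<partial>x\<close> at \<open>(x0, y0)\<close> is obtained by differentiating the
  Cauchy formula for \<open>\<partial>G/\<partial>x\<close> over the circle \<open>|t - x0| = 2\<delta>\<close>; the Cauchy estimates
  in the \<open>y\<close>-directions make the remainder quadratic.\<close>
locale bounded_cholo_polydisc =
  fixes G :: "complex \<times> (complex^'n) \<Rightarrow> complex"
    and G' :: "complex \<times> (complex^'n) \<Rightarrow> complex \<times> (complex^'n) \<Rightarrow> complex"
    and x0 :: complex and y0 :: "complex^'n" and \<delta> M :: real
  assumes G_has_derivative:
      "\<And>t y. cmod (t - x0) + norm (y - y0) < 4*\<delta> \<Longrightarrow> (G has_derivative G' (t, y)) (at (t, y))"
    and G'_cscale:
      "\<And>t y c v. cmod (t - x0) + norm (y - y0) < 4*\<delta> \<Longrightarrow> G' (t, y) (cscale c v) = c * G' (t, y) v"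
    and G_bounded: "\<And>t y. cmod (t - x0) + norm (y - y0) < 4*\<delta> \<Longrightarrow> cmod (G (t, y)) \<le> M"
    and \<delta>_pos: "\<delta> > 0"
begin

lemma M_nonneg: "M \<ge> 0"
proof -
  have "cmod (G (x0, y0)) \<le> M" using G_bounded \<delta>_pos by simp
  then show ?thesis using norm_ge_zero order_trans by blast
qed

lemma G'_linear_on_sphere: "t \<in> sphere x0 (2*\<delta>) \<Longrightarrow> linear (G' (t, y0))"
  using G_has_derivative[of t y0] \<delta>_pos
  by (auto simp: dist_norm norm_minus_commute intro: bounded_linear.linear has_derivative_bounded_linear)

lemma line_slice:
  fixes v :: "complex^'n"
  assumes v: "norm v = 1" and t: "cmod (t - x0) \<le> 2*\<delta>"
  defines "\<phi> \<equiv> \<lambda>z. G (t, y0 + (\<chi> i. z * v $ i))"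
  shows "\<phi> holomorphic_on ball 0 (2*\<delta>)" and "\<And>z. z \<in> ball 0 (2*\<delta>) \<Longrightarrow> cmod (\<phi> z) \<le> M"
    and "deriv \<phi> 0 = G' (t, y0) (0, v)"
proof -
  have inside: "cmod (t - x0) + norm ((y0 + (\<chi> i. z * v $ i)) - y0) < 4*\<delta>"
    if "z \<in> ball 0 (2*\<delta>)" for z
    using that t v by (simp add: norm_vec_cmult)
  have der: "(\<phi> has_field_derivative G' (t, y0 + (\<chi> i. z * v $ i)) (0, v)) (at z)"
    if "z \<in> ball 0 (2*\<delta>)" for z
    unfolding \<phi>_def using G_has_derivative[OF inside[OF that]] G'_cscale[OF inside[OF that]]
    by (intro has_field_derivative_snd_line) auto
  show "\<phi> holomorphic_on ball 0 (2*\<delta>)"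
    using der by (subst holomorphic_on_open) blast+
  show "cmod (\<phi> z) \<le> M" if "z \<in> ball 0 (2*\<delta>)" for z
    unfolding \<phi>_def using G_bounded[OF inside[OF that]] .
  have "(\<chi> i. (0::complex) * v $ i) = 0" by (simp add: vec_eq_iff)
  then show "deriv \<phi> 0 = G' (t, y0) (0, v)"
    using der[of 0] \<delta>_pos by (simp add: DERIV_imp_deriv)
qed

lemma directional_bounds:
  assumes t: "cmod (t - x0) \<le> 2*\<delta>"
  shows directional_derivative_bound: "cmod (G' (t, y0) (0, w)) \<le> (M+1)/\<delta> * norm w"
    and directional_remainder_bound: "norm w \<le> \<delta>/2 \<Longrightarrow>
      cmod (G (t, y0 + w) - G (t, y0) - G' (t, y0) (0, w)) \<le> 2*(M+1)/\<delta>^2 * (norm w)^2"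
proof -
  obtain v where v: "norm v = 1" and w: "w = (\<chi> i. complex_of_real (norm w) * v $ i)"
    using unit_direction by blast
  define \<phi> where "\<phi> z = G (t, y0 + (\<chi> i. z * v $ i))" for z
  note \<phi> = line_slice[OF v t, folded \<phi>_def]
  have "G' (t, y0) (0, w) = G' (t, y0) (cscale (norm w) (0, v))"
    using w by (simp add: cscale_0_vec)
  also have "\<dots> = norm w * deriv \<phi> 0"
    using G'_cscale[of t y0] t \<delta>_pos \<phi>(3) by simp
  finally have G'w: "G' (t, y0) (0, w) = norm w * deriv \<phi> 0" .
  have "cmod (deriv \<phi> 0) \<le> 2*(M+1)/(2*\<delta>)"
    by (rule holomorphic_deriv_bound_ball[OF \<phi>(1)]) (use \<delta>_pos \<phi>(2) in auto)
  also have "\<dots> = (M+1)/\<delta>" using \<delta>_pos by (simp add: field_simps)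
  finally have "norm w * cmod (deriv \<phi> 0) \<le> norm w * ((M+1)/\<delta>)"
    by (rule mult_left_mono) simp
  then show "cmod (G' (t, y0) (0, w)) \<le> (M+1)/\<delta> * norm w"
    unfolding G'w norm_mult by (simp add: ac_simps)
  assume "norm w \<le> \<delta>/2"
  have \<phi>_values: "G (t, y0 + w) = \<phi> (norm w)" "G (t, y0) = \<phi> 0"
    by (simp_all add: \<phi>_def flip: w zero_vec_def)
  have "cmod (G (t, y0 + w) - G (t, y0) - G' (t, y0) (0, w))
      = cmod (\<phi> (norm w) - \<phi> 0 - deriv \<phi> 0 * norm w)"
    unfolding G'w \<phi>_values by (simp only: mult.commute)
  also have "\<dots> \<le> 8*(M+1)/(2*\<delta>)^2 * (cmod (norm w))^2"
    using \<open>norm w \<le> \<delta>/2\<close>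
    by (intro holomorphic_quadratic_remainder_bound[OF \<phi>(1)]) (use \<delta>_pos \<phi>(2) in auto)
  also have "\<dots> = 2*(M+1)/\<delta>^2 * (norm w)^2"
    using \<delta>_pos by (simp add: field_simps power2_eq_square)
  finally show "cmod (G (t, y0 + w) - G (t, y0) - G' (t, y0) (0, w)) \<le> 2*(M+1)/\<delta>^2 * (norm w)^2" .
qed

lemma fst_slice_holomorphic:
  assumes "norm (y - y0) < \<delta>"
  shows "(\<lambda>s. G (s, y)) holomorphic_on ball x0 (3*\<delta>)"
proof -
  have "((\<lambda>s. G (s, y)) has_field_derivative G' (t, y) (1, 0)) (at t)" if "t \<in> ball x0 (3*\<delta>)" for t
  proof -
    have "cmod (t - x0) + norm (y - y0) < 4*\<delta>"
      using that assms by (simp add: dist_norm norm_minus_commute)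
    then show ?thesis using G_has_derivative G'_cscale has_field_derivative_fst_slice by blast
  qed
  then show ?thesis by (subst holomorphic_on_open[OF open_ball]) blast
qed

lemma partial_x_Cauchy_integral:
  assumes "cmod (x - x0) < 2*\<delta>" "norm (y - y0) < \<delta>"
  shows "((\<lambda>t. G (t, y) / (t - x)^2) has_contour_integral (2*pi*\<i>) * partial_x G (x, y))
           (circlepath x0 (2*\<delta>))"
proof -
  have hol: "(\<lambda>s. G (s, y)) holomorphic_on ball x0 (3*\<delta>)" by (rule fst_slice_holomorphic[OF assms(2)])
  have sub: "cball x0 (2*\<delta>) \<subseteq> ball x0 (3*\<delta>)" using \<delta>_pos by auto
  have "((\<lambda>u. G (u, y) / (u - x)^Suc 1) has_contour_integral
          (2*pi*\<i>)/fact 1 * (deriv^^1) (\<lambda>s. G (s, y)) x) (circlepath x0 (2*\<delta>))"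
  proof (rule Cauchy_has_contour_integral_higher_derivative_circlepath)
    show "continuous_on (cball x0 (2*\<delta>)) (\<lambda>s. G (s, y))"
      using holomorphic_on_imp_continuous_on[OF hol] sub continuous_on_subset by blast
    show "(\<lambda>s. G (s, y)) holomorphic_on ball x0 (2*\<delta>)"
      using hol sub ball_subset_cball holomorphic_on_subset by blast
    show "x \<in> ball x0 (2*\<delta>)" using assms(1) by (simp add: dist_norm norm_minus_commute)
  qed
  then show ?thesis by (simp add: partial_x_def power2_eq_square)
qed

lemma difference_quotient_uniform_limit:
  "uniform_limit (sphere x0 (2*\<delta>)) (\<lambda>s t. (G (t, y0 + s *\<^sub>R w) - G (t, y0)) / of_real s)
     (\<lambda>t. G' (t, y0) (0, w)) (at_right 0)"
  unfolding uniform_limit_iff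
proof (intro allI impI)
  fix e :: real assume e: "e > 0"
  define K where "K = 2*(M+1)/\<delta>^2 * (norm w)^2"
  have "\<forall>\<^sub>F s in at_right 0. (0 < s \<and> s * norm w < \<delta>/2) \<and> (0 < s \<and> s * K < e)"
    using \<delta>_pos e by (intro eventually_conj eventually_at_right_0_small) auto
  then show "\<forall>\<^sub>F s in at_right 0. \<forall>t\<in>sphere x0 (2*\<delta>).
      dist ((G (t, y0 + s *\<^sub>R w) - G (t, y0)) / of_real s) (G' (t, y0) (0, w)) < e"
  proof (rule eventually_mono, intro ballI)
    fix s t assume s: "(0 < s \<and> s * norm w < \<delta>/2) \<and> (0 < s \<and> s * K < e)"
      and t: "t \<in> sphere x0 (2*\<delta>)"
    define A where "A = G (t, y0 + s *\<^sub>R w) - G (t, y0)"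
    define D where "D = G' (t, y0) (0, w)"
    have t': "cmod (t - x0) \<le> 2*\<delta>" using t by (simp add: dist_norm norm_minus_commute)
    have "G' (t, y0) (0, s *\<^sub>R w) = s *\<^sub>R D"
      using linear.scaleR[OF G'_linear_on_sphere[OF t], of s "(0, w)"] by (simp add: D_def)
    moreover have "norm (s *\<^sub>R w) \<le> \<delta>/2" using s by simp
    ultimately have "cmod (A - s *\<^sub>R D) \<le> 2*(M+1)/\<delta>^2 * (norm (s *\<^sub>R w))^2"
      using directional_remainder_bound[OF t', of "s *\<^sub>R w"] by (simp add: A_def)
    also have "\<dots> = s * (s * K)"
      using s by (simp add: K_def power_mult_distrib power2_eq_square)
    finally have rem: "cmod (A - s *\<^sub>R D) \<le> s * (s * K)" .
    have "A / of_real s - D = (A - s *\<^sub>R D) / of_real s"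
      using s by (simp add: scaleR_conv_of_real diff_divide_distrib)
    then have "dist (A / of_real s) D = cmod (A - s *\<^sub>R D) / s"
      using s by (simp add: dist_norm norm_divide)
    also have "\<dots> \<le> s * K"
      using rem s by (simp add: divide_le_eq mult.commute)
    finally show "dist ((G (t, y0 + s *\<^sub>R w) - G (t, y0)) / of_real s) (G' (t, y0) (0, w)) < e"
      using s by (simp add: A_def D_def)
  qed
qed

lemma G_continuous_on: "continuous_on {p. cmod (fst p - x0) + norm (snd p - y0) < 4*\<delta>} G"
proof (intro continuous_at_imp_continuous_on ballI)
  fix p assume "p \<in> {p. cmod (fst p - x0) + norm (snd p - y0) < 4*\<delta>}"
  then show "isCont G p"
    using G_has_derivative[of "fst p" "snd p"] has_derivative_continuous by auto
qed

lemma directional_derivative_continuous_on: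
  "continuous_on (sphere x0 (2*\<delta>)) (\<lambda>t. G' (t, y0) (0, w))"
proof (rule uniform_limit_theorem[OF _ difference_quotient_uniform_limit])
  have "\<forall>\<^sub>F s in at_right 0. 0 < s \<and> s * norm w < \<delta>/2"
    using \<delta>_pos by (intro eventually_at_right_0_small) auto
  then show "\<forall>\<^sub>F s in at_right 0.
      continuous_on (sphere x0 (2*\<delta>)) (\<lambda>t. (G (t, y0 + s *\<^sub>R w) - G (t, y0)) / of_real s)"
  proof (rule eventually_mono)
    fix s :: real assume s: "0 < s \<and> s * norm w < \<delta>/2"
    have "continuous_on (sphere x0 (2*\<delta>)) (\<lambda>t. G (t, y0 + c *\<^sub>R w))" if "\<bar>c\<bar> * norm w < \<delta>/2" for c
      by (rule continuous_on_compose2[OF G_continuous_on])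
         (use that \<delta>_pos in \<open>auto intro!: continuous_intros simp: dist_norm norm_minus_commute\<close>)
    from this[of s] this[of 0] show "continuous_on (sphere x0 (2*\<delta>))
        (\<lambda>t. (G (t, y0 + s *\<^sub>R w) - G (t, y0)) / of_real s)"
      using s \<delta>_pos by (auto intro!: continuous_intros)
  qed
qed simp

text \<open>The derivative of \<open>\<partial>G/\<partial>x\<close> at \<open>(x0, y0)\<close> in the direction \<open>(0, w)\<close>.\<close>
definition partial_x_dsnd :: "complex^'n \<Rightarrow> complex" where
  "partial_x_dsnd w =
     contour_integral (circlepath x0 (2*\<delta>)) (\<lambda>t. G' (t, y0) (0, w) / (t - x0)^2) / (2*pi*\<i>)"

lemma has_contour_integral_partial_x_dsnd:
  "((\<lambda>t. G' (t, y0) (0, w) / (t - x0)^2) has_contour_integral (2*pi*\<i>) * partial_x_dsnd w)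
     (circlepath x0 (2*\<delta>))"
proof -
  have "continuous_on (sphere x0 (2*\<delta>)) (\<lambda>t. G' (t, y0) (0, w) / (t - x0)^2)"
    using directional_derivative_continuous_on \<delta>_pos by (intro continuous_intros) auto
  then have "(\<lambda>t. G' (t, y0) (0, w) / (t - x0)^2) contour_integrable_on circlepath x0 (2*\<delta>)"
    using \<delta>_pos by (intro contour_integrable_continuous_circlepath) auto
  then show ?thesis
    by (simp add: partial_x_dsnd_def has_contour_integral_integral)
qed

lemma partial_x_dsnd_unique:
  assumes "((\<lambda>t. G' (t, y0) (0, w) / (t - x0)^2) has_contour_integral (2*pi*\<i>) * z)
             (circlepath x0 (2*\<delta>))"
  shows "partial_x_dsnd w = z"
  using has_contour_integral_unique[OF has_contour_integral_partial_x_dsnd[of w] assms] by simp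

lemma partial_x_dsnd_add: "partial_x_dsnd (a + b) = partial_x_dsnd a + partial_x_dsnd b"
proof (rule partial_x_dsnd_unique)
  show "((\<lambda>t. G' (t, y0) (0, a + b) / (t - x0)^2) has_contour_integral
      (2*pi*\<i>) * (partial_x_dsnd a + partial_x_dsnd b)) (circlepath x0 (2*\<delta>))"
    unfolding distrib_left
  proof (rule has_contour_integral_eq[OF has_contour_integral_add[OF
          has_contour_integral_partial_x_dsnd has_contour_integral_partial_x_dsnd]])
    fix t assume "t \<in> path_image (circlepath x0 (2*\<delta>))"
    then have "linear (G' (t, y0))" using \<delta>_pos by (intro G'_linear_on_sphere) simp
    from linear_add[OF this, of "(0, a)" "(0, b)"]
    show "G' (t, y0) (0, a) / (t - x0)^2 + G' (t, y0) (0, b) / (t - x0)^2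
        = G' (t, y0) (0, a + b) / (t - x0)^2"
      by (simp add: add_divide_distrib)
  qed
qed

lemma partial_x_dsnd_cmult: "partial_x_dsnd (\<chi> i. c * w $ i) = c * partial_x_dsnd w"
proof (rule partial_x_dsnd_unique)
  have "((\<lambda>t. G' (t, y0) (0, \<chi> i. c * w $ i) / (t - x0)^2) has_contour_integral
      c * ((2*pi*\<i>) * partial_x_dsnd w)) (circlepath x0 (2*\<delta>))"
  proof (rule has_contour_integral_eq[OF has_contour_integral_lmul[OF has_contour_integral_partial_x_dsnd]])
    fix t assume "t \<in> path_image (circlepath x0 (2*\<delta>))"
    then have "G' (t, y0) (cscale c (0, w)) = c * G' (t, y0) (0, w)"
      using \<delta>_pos by (intro G'_cscale) (simp add: dist_norm norm_minus_commute)
    then show "c * (G' (t, y0) (0, w) / (t - x0)^2) = G' (t, y0) (0, \<chi> i. c * w $ i) / (t - x0)^2"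
      by (simp add: cscale_0_vec)
  qed
  then show "((\<lambda>t. G' (t, y0) (0, \<chi> i. c * w $ i) / (t - x0)^2) has_contour_integral
      (2*pi*\<i>) * (c * partial_x_dsnd w)) (circlepath x0 (2*\<delta>))"
    by (simp add: ac_simps)
qed

lemma partial_x_dsnd_bound: "cmod (partial_x_dsnd w) \<le> norm w * ((M+1)/(2*\<delta>^2))"
proof -
  have "cmod ((2*pi*\<i>) * partial_x_dsnd w) \<le> ((M+1)/\<delta> * norm w / (4*\<delta>^2)) * (2*pi*(2*\<delta>))"
  proof (rule has_contour_integral_bound_circlepath[OF has_contour_integral_partial_x_dsnd])
    show "0 \<le> (M+1)/\<delta> * norm w / (4*\<delta>^2)" using M_nonneg \<delta>_pos by simp
    fix t assume t: "cmod (t - x0) = 2*\<delta>"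
    have "cmod (G' (t, y0) (0, w)) / (4*\<delta>^2) \<le> (M+1)/\<delta> * norm w / (4*\<delta>^2)"
      using directional_derivative_bound[of t w] t \<delta>_pos by (intro divide_right_mono) auto
    moreover have "cmod ((t - x0)^2) = 4*\<delta>^2" using t by (simp add: norm_power power_mult_distrib)
    ultimately show "cmod (G' (t, y0) (0, w) / (t - x0)^2) \<le> (M+1)/\<delta> * norm w / (4*\<delta>^2)"
      by (simp add: norm_divide)
  qed (use \<delta>_pos in simp)
  also have "\<dots> = 2*pi * (norm w * ((M+1)/(2*\<delta>^2)))"
    using \<delta>_pos by (simp add: field_simps power2_eq_square)
  finally show ?thesis by (simp only: norm_2pi_i_mult_le_iff)
qed

lemma bounded_linear_partial_x_dsnd: "bounded_linear partial_x_dsnd"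
proof (rule bounded_linear_intro[OF partial_x_dsnd_add _ partial_x_dsnd_bound])
  fix r :: real and w :: "complex^'n"
  have "(\<chi> i. complex_of_real r * w $ i) = r *\<^sub>R w"
    by (simp add: vec_eq_iff vector_scaleR_component scaleR_conv_of_real[where 'a=complex])
  then show "partial_x_dsnd (r *\<^sub>R w) = r *\<^sub>R partial_x_dsnd w"
    using partial_x_dsnd_cmult[of "of_real r" w] by (simp add: scaleR_conv_of_real)
qed

lemma increment_integrand_bound:
  assumes t: "cmod (t - x0) = 2*\<delta>" and u: "cmod u \<le> k" and w: "norm w \<le> k" and k: "k \<le> \<delta>/2"
  shows "cmod (G (t, y0 + w) / (t - (x0 + u))^2 - G (t, y0) / (t - (x0 + u))^2
               - G' (t, y0) (0, w) / (t - x0)^2) \<le> 4*(M+1)/\<delta>^4 * k^2"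
proof -
  define E where "E = G (t, y0 + w) - G (t, y0) - G' (t, y0) (0, w)"
  define D where "D = G' (t, y0) (0, w)"
  have t': "cmod (t - x0) \<le> 2*\<delta>" using t by simp
  have "cmod E \<le> 2*(M+1)/\<delta>^2 * (norm w)^2"
    unfolding E_def using directional_remainder_bound[OF t'] w k by simp
  also have "\<dots> \<le> 2*(M+1)/\<delta>^2 * k^2"
    using w M_nonneg by (intro mult_left_mono power_mono) auto
  finally have E: "cmod E \<le> 2*(M+1)/\<delta>^2 * k^2" .
  have "cmod D \<le> (M+1)/\<delta> * norm w"
    unfolding D_def by (rule directional_derivative_bound[OF t'])
  also have "\<dots> \<le> (M+1)/\<delta> * k"
    using w M_nonneg \<delta>_pos by (intro mult_left_mono) auto
  finally have D: "cmod D \<le> (M+1)/\<delta> * k" .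
  have k0: "0 \<le> k" using u norm_ge_zero[of u] by linarith
  have tx: "t - (x0 + u) = (t - x0) - u" by simp
  have "cmod u \<le> \<delta>/2" using u k by simp
  note kernel = inverse_square_shift_bounds[OF t this \<delta>_pos, folded tx]
  have k2: "cmod (1/(t - (x0 + u))^2 - 1/(t - x0)^2) \<le> 2*k/\<delta>^3"
    using kernel(2) u \<delta>_pos by (smt (verit) divide_right_mono zero_less_power)
  have split: "\<And>G1 G0 D q p :: complex. G1/q - G0/q - D/p = (G1 - G0 - D) * (1/q) + D * (1/q - 1/p)"
    by (simp add: divide_inverse algebra_simps)
  have "cmod (G (t, y0 + w) / (t - (x0 + u))^2 - G (t, y0) / (t - (x0 + u))^2
               - G' (t, y0) (0, w) / (t - x0)^2)
      = cmod (E * (1/(t - (x0 + u))^2) + D * (1/(t - (x0 + u))^2 - 1/(t - x0)^2))"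
    by (simp only: split E_def D_def)
  also have "\<dots> \<le> cmod E * cmod (1/(t - (x0 + u))^2) + cmod D * cmod (1/(t - (x0 + u))^2 - 1/(t - x0)^2)"
    by (metis norm_mult norm_triangle_ineq)
  also have "\<dots> \<le> (2*(M+1)/\<delta>^2 * k^2) * (1/\<delta>^2) + ((M+1)/\<delta> * k) * (2*k/\<delta>^3)"
    using E D kernel(1) k2 M_nonneg \<delta>_pos k0 by (intro add_mono mult_mono) auto
  also have "\<dots> = 4*(M+1)/\<delta>^4 * k^2"
    using \<delta>_pos by (simp add: field_simps power2_eq_square eval_nat_numeral)
  finally show ?thesis .
qed

lemma partial_x_increment_bound:
  assumes "norm (u, w) < \<delta>/2"
  shows "cmod (partial_x G (x0 + u, y0 + w) - partial_x G (x0 + u, y0) - partial_x_dsnd w)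
           \<le> 8*(M+1)/\<delta>^3 * (norm (u, w))^2"
proof -
  define k where "k = norm (u, w)"
  have u: "cmod u \<le> k" and w: "norm w \<le> k"
    unfolding k_def by (rule norm_fst_le, rule norm_snd_le)
  have k: "k \<le> \<delta>/2" unfolding k_def using assms by linarith
  have "((\<lambda>t. G (t, y0 + w) / (t - (x0 + u))^2 - G (t, y0) / (t - (x0 + u))^2
               - G' (t, y0) (0, w) / (t - x0)^2) has_contour_integral
        (2*pi*\<i>) * partial_x G (x0 + u, y0 + w) - (2*pi*\<i>) * partial_x G (x0 + u, y0)
          - (2*pi*\<i>) * partial_x_dsnd w) (circlepath x0 (2*\<delta>))"
    using u w k \<delta>_pos
    by (intro has_contour_integral_diff partial_x_Cauchy_integral has_contour_integral_partial_x_dsnd)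
       auto
  then have "cmod ((2*pi*\<i>) * partial_x G (x0 + u, y0 + w) - (2*pi*\<i>) * partial_x G (x0 + u, y0)
          - (2*pi*\<i>) * partial_x_dsnd w) \<le> (4*(M+1)/\<delta>^4 * k^2) * (2*pi*(2*\<delta>))"
    by (rule has_contour_integral_bound_circlepath)
       (use increment_integrand_bound[OF _ u w k] M_nonneg \<delta>_pos in auto)
  also have "\<dots> = 2*pi * (8*(M+1)/\<delta>^3 * k^2)"
    using \<delta>_pos by (simp add: field_simps power2_eq_square eval_nat_numeral)
  finally show ?thesis
    by (simp only: k_def norm_2pi_i_mult_le_iff flip: right_diff_distrib)
qed

lemma partial_x_has_derivative:
  "(partial_x G has_derivative
      (\<lambda>k. deriv (\<lambda>s. partial_x G (s, y0)) x0 * fst k + partial_x_dsnd (snd k))) (at (x0, y0))"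
proof -
  define h where "h s = partial_x G (s, y0)" for s
  have "h holomorphic_on ball x0 (3*\<delta>)"
    unfolding h_def partial_x_def using holomorphic_deriv[OF fst_slice_holomorphic] \<delta>_pos by simp
  then have "(h has_derivative (*) (deriv h x0)) (at (fst (x0, y0)))"
    using \<delta>_pos holomorphic_derivI[of h "ball x0 (3*\<delta>)" x0] by (simp add: has_field_derivative_def)
  from has_derivative_compose[OF has_derivative_fst[OF has_derivative_ident] this]
  have fst_part: "((\<lambda>P. h (fst P)) has_derivative (\<lambda>k. deriv h x0 * fst k)) (at (x0, y0))"
    by simp
  have "((\<lambda>P. partial_x G P - h (fst P)) has_derivative (\<lambda>k. partial_x_dsnd (snd k))) (at (x0, y0))"
  proof (rule has_derivative_at_quadratic_remainder)
    show "bounded_linear (\<lambda>k. partial_x_dsnd (snd k))"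
      using bounded_linear_compose[OF bounded_linear_partial_x_dsnd bounded_linear_snd] by (simp add: o_def)
    fix k :: "complex \<times> (complex^'n)" assume "norm k < \<delta>/2"
    moreover obtain u w where "k = (u, w)" by fastforce
    ultimately show "cmod (partial_x G ((x0, y0) + k) - h (fst ((x0, y0) + k))
        - (partial_x G (x0, y0) - h (fst (x0, y0))) - partial_x_dsnd (snd k)) \<le> 8*(M+1)/\<delta>^3 * (norm k)^2"
      using partial_x_increment_bound[of u w] by (simp add: h_def)
  qed (use \<delta>_pos in simp)
  from has_derivative_add[OF fst_part this] show ?thesis
    by (simp add: h_def[abs_def])
qed

lemma partial_x_complex_differentiable:
  "\<exists>L. (partial_x G has_derivative L) (at (x0, y0)) \<and> (\<forall>c v. L (cscale c v) = c * L v)"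
  using partial_x_has_derivative
  by (intro exI conjI allI) (auto simp: cscale_def partial_x_dsnd_cmult algebra_simps)

end

lemma cholo_on_partial_x:
  assumes "cholo_on S G"
  shows "cholo_on S (partial_x G)"
  unfolding cholo_on_def
proof (intro conjI ballI)
  show "open S" using cholo_on_open[OF assms] .
  fix P assume "P \<in> S"
  obtain x0 y0 where P: "P = (x0, y0)" by fastforce
  obtain G' where G': "\<And>P. P \<in> S \<Longrightarrow> (G has_derivative G' P) (at P)"
    "\<And>P c v. P \<in> S \<Longrightarrow> G' P (cscale c v) = c * G' P v"
    using cholo_on_obtain_derivative[OF assms] by blast
  obtain \<rho> where \<rho>: "\<rho> > 0" "cball P \<rho> \<subseteq> S"
    using open_contains_cball cholo_on_open[OF assms] \<open>P \<in> S\<close> by blast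
  have "compact (G ` cball P \<rho>)"
    using \<rho>(2) cholo_on_imp_continuous_on[OF assms]
    by (intro compact_continuous_image compact_cball) (rule continuous_on_subset)
  then obtain M where "\<forall>z \<in> G ` cball P \<rho>. cmod z \<le> M"
    using compact_imp_bounded bounded_iff by blast
  then have M: "\<And>Q. Q \<in> cball P \<rho> \<Longrightarrow> cmod (G Q) \<le> M" by blast
  have inside: "(t, y) \<in> cball P \<rho>" if "cmod (t - x0) + norm (y - y0) < 4*(\<rho>/4)" for t y
  proof -
    have "dist P (t, y) \<le> cmod (x0 - t) + norm (y0 - y)"
      using norm_Pair_le[of "x0 - t" "y0 - y"] by (simp add: P dist_norm)
    then show ?thesis using that by (simp add: norm_minus_commute)
  qed
  have inS: "(t, y) \<in> S" if "cmod (t - x0) + norm (y - y0) < 4*(\<rho>/4)" for t y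
    using inside[OF that] \<rho>(2) by blast
  interpret bounded_cholo_polydisc G G' x0 y0 "\<rho>/4" M
  proof
    fix t y c v assume "cmod (t - x0) + norm (y - y0) < 4*(\<rho>/4)"
    then show "(G has_derivative G' (t, y)) (at (t, y))" "G' (t, y) (cscale c v) = c * G' (t, y) v"
      and "cmod (G (t, y)) \<le> M"
      using G' M inside inS by blast+
  qed (use \<rho> in simp)
  show "\<exists>L. (partial_x G has_derivative L) (at P) \<and> (\<forall>c v. L (cscale c v) = c * L v)"
    using partial_x_complex_differentiable by (simp add: P)
qed

definition slice_coeff :: "(complex \<times> (complex^'n) \<Rightarrow> complex) \<Rightarrow> complex \<times> (complex^'n) \<Rightarrow> nat \<Rightarrow> complex"
  where "slice_coeff g P j = (deriv ^^ j) (\<lambda>t. g (t, snd P)) (fst P) / fact j"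

lemma partial_x_funpow: "(partial_x ^^ k) G P = (deriv ^^ k) (\<lambda>t. G (t, snd P)) (fst P)"
proof (induction k arbitrary: P)
  case (Suc k)
  have "(partial_x ^^ Suc k) G P = deriv (\<lambda>t. (partial_x ^^ k) G (t, snd P)) (fst P)"
    by (simp add: partial_x_def)
  also have "\<dots> = (deriv ^^ Suc k) (\<lambda>t. G (t, snd P)) (fst P)"
    by (simp add: Suc eta_contract_eq)
  finally show ?case .
qed simp

lemma cholo_on_slice_coeff:
  assumes "cholo_on S g"
  shows "cholo_on S (\<lambda>P. slice_coeff g P j)"
proof -
  have "cholo_on S ((partial_x ^^ j) g)"
    by (induction j) (use assms in \<open>auto intro: cholo_on_partial_x\<close>)
  then have "cholo_on S (\<lambda>P. (partial_x ^^ j) g P * (1 / fact j))"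
    using cholo_on_mult[OF _ cholo_on_const[OF cholo_on_open[OF assms]]] by blast
  then show ?thesis by (simp add: slice_coeff_def partial_x_funpow)
qed

section \<open>Formal power series and formal residues\<close>

text \<open>The numerator of the \<open>n\<close>-th coefficient of the inverse of a power series; being
  a polynomial in the coefficients, it is holomorphic when they are.\<close>
fun inverse_numer :: "(nat \<Rightarrow> 'a::comm_ring_1) \<Rightarrow> nat \<Rightarrow> 'a" where
  "inverse_numer c 0 = 1"
| "inverse_numer c (Suc n) = - (\<Sum>i\<in>{1..Suc n}. c i * c 0 ^ (i - 1) * inverse_numer c (Suc n - i))"

lemma fps_inverse_nth_eq_inverse_numer:
  fixes c :: "nat \<Rightarrow> 'a::field"
  assumes "c 0 \<noteq> 0"
  shows "inverse (Abs_fps c) $ n = inverse_numer c n / c 0 ^ Suc n"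
proof (induction n rule: less_induct)
  case (less n)
  show ?case
  proof (cases n)
    case 0
    then show ?thesis using assms by (simp add: fps_inverse_def inverse_eq_divide)
  next
    case (Suc m)
    have "inverse (Abs_fps c) $ Suc m
        = - inverse (c 0) * (\<Sum>i\<in>{1..Suc m}. c i * inverse (Abs_fps c) $ (Suc m - i))"
      using assms by (simp add: fps_inverse_def)
    also have "\<dots> = - inverse (c 0) * (\<Sum>i\<in>{1..Suc m}. c i * (inverse_numer c (Suc m - i) / c 0 ^ Suc (Suc m - i)))"
      using less Suc by (intro arg_cong2[where f="(*)"] refl sum.cong) auto
    also have "\<dots> = (\<Sum>i\<in>{1..Suc m}. - (c i * c 0 ^ (i - 1) * inverse_numer c (Suc m - i)) / c 0 ^ Suc (Suc m))"
      unfolding sum_distrib_left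
    proof (rule sum.cong[OF refl])
      fix i assume i: "i \<in> {1..Suc m}"
      have "c 0 ^ Suc (Suc m) = c 0 ^ (i - 1) * (c 0 * c 0 ^ Suc (Suc m - i))"
        using i by (simp flip: power_add power_Suc)
      then show "- inverse (c 0) * (c i * (inverse_numer c (Suc m - i) / c 0 ^ Suc (Suc m - i)))
          = - (c i * c 0 ^ (i - 1) * inverse_numer c (Suc m - i)) / c 0 ^ Suc (Suc m)"
        using assms by (simp add: field_simps)
    qed
    also have "\<dots> = inverse_numer c (Suc m) / c 0 ^ Suc (Suc m)"
      by (simp only: inverse_numer.simps sum_negf[symmetric] sum_divide_distrib)
    finally show ?thesis using Suc by simp
  qed
qed

lemma inverse_numer_cong: "(\<And>i. i \<le> n \<Longrightarrow> c i = c' i) \<Longrightarrow> inverse_numer c n = inverse_numer c' n"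
proof (induction n rule: less_induct)
  case (less n)
  then show ?case
    by (cases n) (auto intro!: sum.cong arg_cong2[where f="(*)"] arg_cong[where f="\<lambda>x. x ^ _"])
qed

definition fps_order_ge :: "'a::zero fps \<Rightarrow> nat \<Rightarrow> bool" where
  "fps_order_ge p m \<longleftrightarrow> (\<forall>j<m. p $ j = 0)"

lemma fps_order_ge_mult:
  fixes p q :: "'a::comm_semiring_0 fps"
  assumes "fps_order_ge p a" "fps_order_ge q b"
  shows "fps_order_ge (p * q) (a + b)"
  unfolding fps_order_ge_def
proof (intro allI impI)
  fix n assume "n < a + b"
  then have "p $ i * q $ (n - i) = 0" if "i \<in> {0..n}" for i
    using assms that by (cases "i < a") (auto simp: fps_order_ge_def)
  then show "(p * q) $ n = 0" by (simp add: fps_mult_nth)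
qed

lemma fps_mult_nth_order_ge:
  fixes p q :: "'a::comm_semiring_0 fps"
  assumes "fps_order_ge p a" "fps_order_ge q b"
  shows "(p * q) $ (a + b) = p $ a * q $ b"
proof -
  have "(p * q) $ (a + b) = (\<Sum>i\<in>{a}. p $ i * q $ (a + b - i))"
    unfolding fps_mult_nth
  proof (rule sum.mono_neutral_right)
    show "\<forall>i\<in>{0..a + b} - {a}. p $ i * q $ (a + b - i) = 0"
    proof
      fix i assume "i \<in> {0..a + b} - {a}"
      then have "i < a \<or> a + b - i < b" by auto
      then show "p $ i * q $ (a + b - i) = 0" using assms by (auto simp: fps_order_ge_def)
    qed
  qed auto
  then show ?thesis by simp
qed

lemma fps_order_ge_deriv: "fps_order_ge p (Suc a) \<Longrightarrow> fps_order_ge (fps_deriv p) a"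
  by (auto simp: fps_order_ge_def fps_deriv_nth)

lemma fps_order_ge_Lie_iterate:
  fixes L :: "'a::comm_semiring_1 fps"
  assumes L: "fps_order_ge L (Suc \<mu>)" and k: "k \<ge> 1"
  shows "fps_order_ge (((\<lambda>p. L * fps_deriv p) ^^ k) fps_X) (k * \<mu> + 1)"
  using k
proof (induction k rule: dec_induct)
  case base
  then show ?case using L by simp
next
  case (step k)
  from fps_order_ge_mult[OF L fps_order_ge_deriv[OF step.IH[unfolded Suc_eq_plus1[symmetric]]]]
  show ?case by (simp add: algebra_simps)
qed

lemma flow1_nth:
  fixes L :: "complex fps"
  assumes L: "fps_order_ge L \<mu>" "\<mu> \<ge> 2" and m: "2 \<le> m" "m \<le> 2*\<mu> - 1"
  shows "flow1 L $ m = L $ m + (if m = 2*\<mu> - 1 then of_nat \<mu> * (L $ \<mu>)^2 / 2 else 0)"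
proof -
  define f where "f k = (((\<lambda>p. L * fps_deriv p) ^^ k) fps_X) $ m / fact k" for k
  have L': "fps_order_ge L (Suc (\<mu> - 1))" using L by simp
  have "flow1 L $ m = (\<Sum>k\<in>{0,1,2}. f k)"
    unfolding flow1_def fps_nth_Abs_fps f_def[symmetric]
  proof (rule sum.mono_neutral_right)
    show "\<forall>k\<in>{..m} - {0, 1, 2}. f k = 0"
    proof
      fix k assume "k \<in> {..m} - {0, 1, 2}"
      then have "k \<ge> 3" by auto
      have "3 * (\<mu> - 1) \<le> k * (\<mu> - 1)" using \<open>k \<ge> 3\<close> by (rule mult_right_mono) simp
      then have "m < k * (\<mu> - 1) + 1" using m L(2) by linarith
      then show "f k = 0"
        using fps_order_ge_Lie_iterate[OF L', of k] \<open>k \<ge> 3\<close> by (simp add: fps_order_ge_def f_def)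
    qed
  qed (use m in auto)
  also have "\<dots> = L $ m + (L * fps_deriv L) $ m / 2"
    using m by (simp add: f_def numeral_2_eq_2)
  also have "(L * fps_deriv L) $ m = (if m = 2*\<mu> - 1 then of_nat \<mu> * (L $ \<mu>)^2 else 0)"
  proof -
    have dL: "fps_order_ge (fps_deriv L) (\<mu> - 1)" by (rule fps_order_ge_deriv[OF L'])
    show ?thesis
    proof (cases "m = 2*\<mu> - 1")
      case True
      then have "m = \<mu> + (\<mu> - 1)" using L(2) by simp
      then show ?thesis
        using True fps_mult_nth_order_ge[OF L(1) dL] L(2)
        by (simp add: fps_deriv_nth power2_eq_square)
    next
      case False
      then have "m < \<mu> + (\<mu> - 1)" using m by auto
      then show ?thesis
        using False fps_order_ge_mult[OF L(1) dL] by (simp add: fps_order_ge_def)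
    qed
  qed
  finally show ?thesis by auto
qed

text \<open>The coefficient of \<open>s\<^bsup>\<nu>+i\<^esup>\<close> (\<open>i < \<nu>\<close>) of the generator \<open>L\<close> of
  \<open>\<phi>(s) = s + \<Sum>\<^sub>j a\<^sub>j s\<^sup>j\<close> when \<open>a\<^sub>2 = \<dots> = a\<^bsub>\<nu>-1\<^esub> = 0 \<noteq> a\<^sub>\<nu>\<close>:
  up to order \<open>2\<nu> - 1\<close> the Lie series of \<open>L\<close> is \<open>s + L + L L'/2\<close>, and \<open>L L'/2\<close>
  only contributes \<open>\<nu> a\<^sub>\<nu>\<^sup>2/2\<close> to the coefficient of \<open>s\<^bsup>2\<nu>-1\<^esup>\<close>.\<close>
definition log_coeff :: "(nat \<Rightarrow> complex) \<Rightarrow> nat \<Rightarrow> nat \<Rightarrow> complex" where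
  "log_coeff a \<nu> i = (if i = \<nu> - 1 then a (2*\<nu> - 1) - of_nat \<nu> * (a \<nu>)^2 / 2 else a (\<nu> + i))"

lemma flow1_subdegree:
  fixes L T :: "complex fps"
  assumes L0: "L $ 0 = 0" and L1: "L $ 1 = 0" and T: "flow1 L = T" and \<nu>: "\<nu> \<ge> 2"
    and Tz: "\<And>j. 2 \<le> j \<Longrightarrow> j < \<nu> \<Longrightarrow> T $ j = 0" and T\<nu>: "T $ \<nu> \<noteq> 0"
  shows "subdegree L = \<nu>"
proof -
  have "L \<noteq> 0"
  proof
    assume "L = 0"
    then have "T $ \<nu> = 0"
      using flow1_nth[of 0 \<nu> \<nu>] T \<nu> by (simp add: fps_order_ge_def)
    with T\<nu> show False by simp
  qed
  define \<mu> where "\<mu> = subdegree L"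
  have L\<mu>: "L $ \<mu> \<noteq> 0" using \<open>L \<noteq> 0\<close> by (simp add: \<mu>_def)
  have oL: "fps_order_ge L \<mu>" unfolding fps_order_ge_def \<mu>_def using nth_less_subdegree_zero by blast
  have \<mu>2: "\<mu> \<ge> 2"
  proof (rule ccontr)
    assume "\<not> \<mu> \<ge> 2"
    then have "\<mu> = 0 \<or> \<mu> = 1" by auto
    then show False using L\<mu> L0 L1 by auto
  qed
  have T_eq: "T $ m = L $ m + (if m = 2*\<mu> - 1 then of_nat \<mu> * (L $ \<mu>)^2 / 2 else 0)"
    if "2 \<le> m" "m \<le> 2*\<mu> - 1" for m
    using flow1_nth[OF oL \<mu>2 that] T by simp
  consider "\<mu> < \<nu>" | "\<mu> = \<nu>" | "\<nu> < \<mu>" by linarith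
  then show ?thesis
  proof cases
    case 1
    moreover have "\<mu> \<le> 2*\<mu> - 1" "\<mu> \<noteq> 2*\<mu> - 1" using \<mu>2 by auto
    ultimately show ?thesis using T_eq[of \<mu>] Tz[of \<mu>] \<mu>2 L\<mu> by simp
  next
    case 3
    then have "L $ \<nu> = 0" using oL by (simp add: fps_order_ge_def)
    moreover have "\<nu> \<le> 2*\<mu> - 1" "\<nu> \<noteq> 2*\<mu> - 1" using 3 \<nu> by auto
    ultimately show ?thesis using T_eq[of \<nu>] \<nu> T\<nu> by simp
  qed (simp add: \<mu>_def)
qed

lemma flow1_eq_imp_log_coeff:
  fixes L T :: "complex fps"
  assumes L0: "L $ 0 = 0" and L1: "L $ 1 = 0" and T: "flow1 L = T" and \<nu>: "\<nu> \<ge> 2"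
    and Tz: "\<And>j. 2 \<le> j \<Longrightarrow> j < \<nu> \<Longrightarrow> T $ j = 0" and T\<nu>: "T $ \<nu> \<noteq> 0"
    and i: "i < \<nu>"
  shows "L $ (\<nu> + i) = log_coeff (fps_nth T) \<nu> i"
proof -
  have oL: "fps_order_ge L \<nu>"
    using flow1_subdegree[OF L0 L1 T \<nu> Tz T\<nu>] nth_less_subdegree_zero by (auto simp: fps_order_ge_def)
  have T_eq: "T $ m = L $ m + (if m = 2*\<nu> - 1 then of_nat \<nu> * (L $ \<nu>)^2 / 2 else 0)"
    if "2 \<le> m" "m \<le> 2*\<nu> - 1" for m
    using flow1_nth[OF oL \<nu> that] T by simp
  have L\<nu>: "L $ \<nu> = T $ \<nu>" using T_eq[of \<nu>] \<nu> by simp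
  show ?thesis
  proof (cases "i = \<nu> - 1")
    case True
    then have "\<nu> + i = 2*\<nu> - 1" using \<nu> by simp
    then show ?thesis using T_eq[of "\<nu> + i"] True \<nu> L\<nu> by (simp add: log_coeff_def)
  next
    case False
    then have "\<nu> + i \<noteq> 2*\<nu> - 1" "\<nu> + i \<le> 2*\<nu> - 1" using i by auto
    then show ?thesis using T_eq[of "\<nu> + i"] False \<nu> by (simp add: log_coeff_def)
  qed
qed

lemma fls_residue_deriv_times_inverse_power:
  fixes H :: "'a::field_char_0 fls"
  assumes "H \<noteq> 0" "fls_subdegree H = 1"
  shows "fls_residue (fls_deriv H * inverse H ^ Suc j) = (if j = 0 then 1 else 0)"
proof (cases j)
  case 0
  then show ?thesis using fls_residue_deriv_times_inverse_eq_subdegree(1)[of H] assms by simp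
next
  case (Suc k)
  have "fls_deriv (inverse H ^ Suc k) = of_nat (Suc k) * inverse H ^ k * fls_deriv (inverse H)"
    using fls_deriv_power[of "inverse H" "Suc k"] by simp
  also have "\<dots> = of_int (- int (Suc k)) * (fls_deriv H * inverse H ^ Suc j)"
    by (simp add: Suc fls_inverse_deriv power2_eq_square algebra_simps)
  finally have "of_int (- int (Suc k)) * fls_residue (fls_deriv H * inverse H ^ Suc j) = (0::'a)"
    using fls_residue_deriv[of "inverse H ^ Suc k"] by (simp only: fls_residue_of_int_times)
  moreover have "of_int (- int (Suc k)) \<noteq> (0::'a)" by (simp only: of_int_eq_0_iff)
  ultimately have "fls_residue (fls_deriv H * inverse H ^ Suc j) = 0" by (meson mult_eq_0_iff)
  then show ?thesis using Suc by simp
qed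

lemma fps_const_plus_X_times_shift:
  fixes f :: "'a::comm_ring_1 fps"
  shows "fps_const (f $ 0) + fps_X * fps_shift 1 f = f"
  by (rule fps_ext) auto

text \<open>Invariance of the residue under the substitution \<open>s = h(\<sigma>)\<close>, for the forms
  \<open>U(s) s\<^bsup>-\<nu>-1\<^esup> ds\<close>.\<close>
lemma fls_residue_deriv_times_compose:
  fixes U h :: "'a::field_char_0 fps"
  assumes h0: "h $ 0 = 0" and h1: "h $ 1 \<noteq> 0"
  shows "fls_residue (fls_deriv (fps_to_fls h) * fps_to_fls (U oo h) * inverse (fps_to_fls h) ^ Suc \<nu>)
           = U $ \<nu>"
proof -
  define H where "H = fps_to_fls h"
  have "h \<noteq> 0" using h1 by auto
  then have Hnz: "H \<noteq> 0" by (simp add: H_def)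
  have "subdegree h = 1" by (rule subdegreeI) (use h0 h1 in auto)
  then have Hsub: "fls_subdegree H = 1" by (simp add: H_def fls_subdegree_fls_to_fps)
  have step: "fls_deriv H * fps_to_fls (U oo h) * inverse H ^ Suc n
      = fls_const (U $ 0) * (fls_deriv H * inverse H ^ Suc n)
        + fls_deriv H * fps_to_fls (fps_shift 1 U oo h) * inverse H ^ n" for U n
  proof -
    have "U oo h = fps_const (U $ 0) + h * (fps_shift 1 U oo h)"
      by (subst (1) fps_const_plus_X_times_shift[symmetric, of U])
         (simp add: fps_compose_add_distrib fps_compose_mult_distrib[OF h0] h0)
    then have "fps_to_fls (U oo h) = fls_const (U $ 0) + H * fps_to_fls (fps_shift 1 U oo h)"
      by (simp add: H_def fls_times_fps_to_fls)
    moreover have "H * inverse H ^ Suc n = inverse H ^ n"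
      using Hnz by (simp add: mult.assoc[symmetric])
    ultimately show ?thesis
      by (simp add: distrib_left distrib_right mult.assoc mult.left_commute[of H])
  qed
  show ?thesis
    unfolding H_def[symmetric]
  proof (induction \<nu> arbitrary: U)
    case 0
    have "fls_residue (fls_deriv H * fps_to_fls (fps_shift 1 U oo h)) = 0"
      by (simp add: H_def fls_deriv_fps_to_fls flip: fls_times_fps_to_fls)
    then show ?case
      using step[of U 0] fls_residue_deriv_times_inverse_power[OF Hnz Hsub, of 0]
      by (simp add: fls_residue_add)
  next
    case (Suc \<nu>)
    then show ?case
      using step[of U "Suc \<nu>"] fls_residue_deriv_times_inverse_power[OF Hnz Hsub, of "Suc \<nu>"]
      by (simp add: fls_residue_add)
  qed
qed

text \<open>The residue of \<open>d\<sigma>/F\<close> is a conjugacy invariant of the vector field: it equals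
  that of \<open>ds/L\<close>.\<close>
lemma fls_residue_inverse_conjugate:
  fixes L h F :: "'a::field_char_0 fps"
  assumes L0: "L $ 0 = 0" and "L \<noteq> 0" and h0: "h $ 0 = 0" and h1: "h $ 1 \<noteq> 0"
    and conj: "L oo h = fps_deriv h * F"
  shows "fls_residue (inverse (fps_to_fls F))
           = inverse_numer (\<lambda>i. L $ (subdegree L + i)) (subdegree L - 1) / (L $ subdegree L) ^ subdegree L"
proof -
  define \<nu> where "\<nu> = subdegree L"
  define V where "V = fps_shift \<nu> L"
  define H where "H = fps_to_fls h"
  have L\<nu>: "L $ \<nu> \<noteq> 0" using \<open>L \<noteq> 0\<close> by (simp add: \<nu>_def)
  then obtain \<mu> where \<mu>: "\<nu> = Suc \<mu>" using L0 by (cases \<nu>) auto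
  have V0: "V $ 0 \<noteq> 0" using L\<nu> by (simp add: V_def)
  have "L = V * fps_X ^ \<nu>" by (simp add: V_def \<nu>_def fps_shift_times_fps_X_power)
  then have "L oo h = (V oo h) * h ^ \<nu>"
    using h0 by (simp add: fps_compose_mult_distrib flip: fps_compose_power)
  then have eq: "fps_to_fls (V oo h) * H ^ \<nu> = fls_deriv H * fps_to_fls F"
    using conj by (simp add: H_def fls_deriv_fps_to_fls flip: fls_times_fps_to_fls fps_to_fls_power)
  have "fps_deriv h \<noteq> 0"
  proof
    assume "fps_deriv h = 0"
    then have "fps_deriv h $ 0 = 0" by (simp only: fps_zero_nth)
    with h1 show False by simp
  qed
  then have D: "fls_deriv H \<noteq> 0" by (simp add: H_def fls_deriv_fps_to_fls)
  have "(V oo h) $ 0 \<noteq> 0" using V0 h0 by (simp add: fps_compose_nth_0)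
  then have W: "inverse (fps_to_fls (V oo h)) = fps_to_fls (inverse V oo h)"
    by (simp add: fls_inverse_fps_to_fls fps_inverse_compose[OF h0 V0] subdegree_eq_0)
  from eq D have "fps_to_fls F = fps_to_fls (V oo h) * H ^ \<nu> / fls_deriv H"
    by (simp add: eq_divide_eq)
  then have "inverse (fps_to_fls F) = fls_deriv H * fps_to_fls (inverse V oo h) * inverse H ^ Suc \<mu>"
    by (simp add: \<mu> W inverse_divide divide_inverse inverse_mult_distrib power_inverse mult.assoc)
  then have "fls_residue (inverse (fps_to_fls F)) = inverse V $ \<mu>"
    using fls_residue_deriv_times_compose[OF h0 h1] by (simp add: H_def)
  also have "\<dots> = inverse_numer (\<lambda>i. L $ (\<nu> + i)) \<mu> / (L $ \<nu>) ^ \<nu>"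
    using fps_inverse_nth_eq_inverse_numer[of "\<lambda>i. L $ (\<nu> + i)" \<mu>] L\<nu> \<mu>
    by (simp add: V_def fps_shift_def add.commute)
  finally show ?thesis using \<mu> by (simp add: \<nu>_def)
qed

lemma residue_inverse_eq_fls_residue:
  fixes f :: "complex \<Rightarrow> complex"
  assumes hol: "f holomorphic_on ball z \<epsilon>" and \<epsilon>: "\<epsilon> > 0"
  shows "residue (\<lambda>t. 1 / f t) z = fls_residue (inverse (fps_to_fls (taylor_fps (\<lambda>s. f (z + s)) 0)))"
proof -
  have "(\<lambda>s. z + s) ` ball 0 \<epsilon> \<subseteq> ball z \<epsilon>" by (auto simp: dist_norm)
  then have "(\<lambda>s. f (z + s)) holomorphic_on ball 0 \<epsilon>"
    by (intro holomorphic_on_compose_gen[OF _ hol, unfolded o_def]) (auto intro!: holomorphic_intros)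
  then have "(\<lambda>s. f (z + s)) has_fps_expansion taylor_fps (\<lambda>s. f (z + s)) 0"
    using has_fps_expansion_fps_expansion[of "ball 0 \<epsilon>" "\<lambda>s. f (z + s)"] \<epsilon>
    by (simp add: fps_expansion_def taylor_fps_def)
  then have "(\<lambda>s. inverse (f (z + s))) has_laurent_expansion inverse (fps_to_fls (taylor_fps (\<lambda>s. f (z + s)) 0))"
    by (intro has_laurent_expansion_inverse has_laurent_expansion_fps)
  then show ?thesis
    by (intro has_laurent_expansion_residue) (simp add: inverse_eq_divide)
qed

section \<open>The residue function\<close>

lemma cholo_on_inverse_numer:
  assumes "open S" "\<And>i. cholo_on S (\<lambda>P. c P i)"
  shows "cholo_on S (\<lambda>P. inverse_numer (c P) n)"
proof (induction n rule: less_induct)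
  case (less n)
  show ?case
  proof (cases n)
    case 0
    then show ?thesis using assms by (simp add: cholo_on_const)
  next
    case (Suc m)
    have "cholo_on S (\<lambda>P. \<Sum>i\<in>{1..Suc m}. c P i * c P 0 ^ (i - 1) * inverse_numer (c P) (Suc m - i))"
      using less Suc assms by (intro cholo_on_sum cholo_on_mult cholo_on_power) auto
    then show ?thesis using Suc by (simp only: inverse_numer.simps cholo_on_uminus)
  qed
qed

lemma log_coeff_cong:
  "\<nu> \<ge> 1 \<Longrightarrow> (\<And>j. j \<ge> 1 \<Longrightarrow> a j = b j) \<Longrightarrow> log_coeff a \<nu> i = log_coeff b \<nu> i"
  by (simp add: log_coeff_def)

lemma cholo_on_log_coeff:
  assumes "open S" "\<And>j. cholo_on S (\<lambda>P. a P j)"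
  shows "cholo_on S (\<lambda>P. log_coeff (a P) \<nu> i)"
proof (cases "i = \<nu> - 1")
  case True
  have "cholo_on S (\<lambda>P. a P (2*\<nu> - 1) - of_nat \<nu> / 2 * (a P \<nu>)^2)"
    using assms by (intro cholo_on_diff cholo_on_mult cholo_on_const cholo_on_power)
  moreover have "(\<lambda>P. log_coeff (a P) \<nu> i) = (\<lambda>P. a P (2*\<nu> - 1) - of_nat \<nu> / 2 * (a P \<nu>)^2)"
    using True by (simp add: log_coeff_def fun_eq_iff)
  ultimately show ?thesis by simp
next
  case False
  then show ?thesis using assms(2) by (simp add: log_coeff_def)
qed

lemma taylor_fps_slice_nth:
  assumes "cholo_on S g" "P \<in> S" "j \<ge> 1"
  shows "taylor_fps (\<lambda>s. g (fst P + s, snd P) - fst P) 0 $ j = slice_coeff g P j"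
proof -
  obtain \<epsilon> where \<epsilon>: "\<epsilon> > 0" and hol: "(\<lambda>t. g (t, snd P)) holomorphic_on ball (fst P) \<epsilon>"
    using holomorphic_on_fst_slice[OF assms(1,2)] by blast
  have "(\<lambda>s. fst P + s) ` ball 0 \<epsilon> \<subseteq> ball (fst P) \<epsilon>" by (auto simp: dist_norm)
  then have hol': "(\<lambda>s. g (fst P + s, snd P)) holomorphic_on ball 0 \<epsilon>"
    by (intro holomorphic_on_compose_gen[OF _ hol, unfolded o_def]) (auto intro!: holomorphic_intros)
  have "(deriv ^^ j) (\<lambda>s. g (fst P + s, snd P) - fst P) 0
      = (deriv ^^ j) (\<lambda>s. g (fst P + s, snd P)) 0 - (deriv ^^ j) (\<lambda>s. fst P) 0"
    by (rule higher_deriv_diff[OF hol']) (use \<epsilon> in \<open>auto intro: holomorphic_intros\<close>)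
  also have "(deriv ^^ j) (\<lambda>s. fst P) 0 = 0" using assms(3) by simp
  also have "(deriv ^^ j) (\<lambda>s. g (fst P + s, snd P)) 0 = (deriv ^^ j) (\<lambda>s. g (1 * s + fst P, snd P)) 0"
    by (simp add: add.commute)
  also have "\<dots> = 1 ^ j * (deriv ^^ j) (\<lambda>t. g (t, snd P)) (1 * 0 + fst P)"
    by (rule higher_deriv_compose_linear'[OF hol, where S="ball 0 \<epsilon>"]) (use \<epsilon> in \<open>auto simp: dist_norm\<close>)
  finally show ?thesis by (simp add: taylor_fps_def slice_coeff_def)
qed

lemma nu_eq_enat_slice_coeff:
  assumes "cholo_on S g" "P \<in> S" "g P = fst P" "partial_x g P = 1" "nu g P = enat \<nu>"
  shows "\<nu> \<ge> 2" "slice_coeff g P \<nu> \<noteq> 0" "\<And>j. 2 \<le> j \<Longrightarrow> j < \<nu> \<Longrightarrow> slice_coeff g P j = 0"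
proof -
  obtain \<epsilon> where \<epsilon>: "\<epsilon> > 0" and hol: "(\<lambda>t. g (t, snd P)) holomorphic_on ball (fst P) \<epsilon>"
    using holomorphic_on_fst_slice[OF assms(1,2)] by blast
  define \<phi> where "\<phi> = (\<lambda>t. g (t, snd P) - t)"
  have d\<phi>: "(deriv ^^ k) \<phi> (fst P) = (deriv ^^ k) (\<lambda>t. g (t, snd P)) (fst P) - (deriv ^^ k) (\<lambda>t. t) (fst P)" for k
    unfolding \<phi>_def by (rule higher_deriv_diff[OF hol]) (use \<epsilon> in \<open>auto intro: holomorphic_intros\<close>)
  have ex: "\<exists>k. (deriv ^^ k) \<phi> (fst P) \<noteq> 0" and \<nu>: "\<nu> = (LEAST k. (deriv ^^ k) \<phi> (fst P) \<noteq> 0)"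
    using assms(5) by (auto simp: nu_def ordat_def \<phi>_def split: if_splits)
  have nz: "(deriv ^^ \<nu>) \<phi> (fst P) \<noteq> 0" unfolding \<nu> by (rule LeastI_ex[OF ex])
  have z: "(deriv ^^ k) \<phi> (fst P) = 0" if "k < \<nu>" for k
    using not_less_Least[of k "\<lambda>k. (deriv ^^ k) \<phi> (fst P) \<noteq> 0"] that unfolding \<nu> by blast
  have "(deriv ^^ 0) \<phi> (fst P) = 0" using assms(3) by (simp add: \<phi>_def)
  moreover have "(deriv ^^ 1) \<phi> (fst P) = 0"
    using d\<phi>[of 1] assms(4) by (simp add: partial_x_def)
  ultimately show \<nu>2: "\<nu> \<ge> 2"
    using nz by (metis One_nat_def less_2_cases not_le)
  show "slice_coeff g P \<nu> \<noteq> 0" using nz d\<phi>[of \<nu>] \<nu>2 by (simp add: slice_coeff_def)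
  show "slice_coeff g P j = 0" if "2 \<le> j" "j < \<nu>" for j
    using z[OF that(2)] d\<phi>[of j] that(1) by (simp add: slice_coeff_def)
qed

lemma unip_res_eq:
  assumes g: "cholo_on S g" and P: "P \<in> S" "g P = fst P" "partial_x g P = 1"
    and res: "unip_res g \<gamma> P \<rho>" and nu: "nu g P = enat \<nu>"
  shows "\<rho> = inverse_numer (log_coeff (slice_coeff g P) \<nu>) (\<nu> - 1) / slice_coeff g P \<nu> ^ \<nu>"
proof -
  obtain f \<epsilon> and L h :: "complex fps" where f: "\<epsilon> > 0" "f holomorphic_on ball (fst P) \<epsilon>"
    and L: "L $ 0 = 0" "L $ 1 = 0" and flow: "flow1 L = taylor_fps (\<lambda>s. g (fst P + s, snd P) - fst P) 0"
    and h: "h $ 0 = 0" "h $ 1 \<noteq> 0"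
    and conj: "L oo h = fps_deriv h * taylor_fps (\<lambda>s. f (fst P + s)) 0"
    and \<rho>: "\<rho> = residue (\<lambda>t. 1 / f t) (fst P)"
    using res unfolding unip_res_def by blast
  define T where "T = taylor_fps (\<lambda>s. g (fst P + s, snd P) - fst P) 0"
  have T: "T $ j = slice_coeff g P j" if "j \<ge> 1" for j
    unfolding T_def using taylor_fps_slice_nth[OF g P(1) that] .
  note \<nu> = nu_eq_enat_slice_coeff[OF g P nu]
  have Tz: "T $ j = 0" if "2 \<le> j" "j < \<nu>" for j using T[of j] \<nu>(3)[OF that] that by simp
  have T\<nu>: "T $ \<nu> \<noteq> 0" using T[of \<nu>] \<nu>(1,2) by simp
  have sub: "subdegree L = \<nu>" by (rule flow1_subdegree[OF L flow[folded T_def] \<nu>(1) Tz T\<nu>])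
  note log = flow1_eq_imp_log_coeff[OF L flow[folded T_def] \<nu>(1) Tz T\<nu>]
  have "L \<noteq> 0" using sub \<nu>(1) by auto
  have "\<rho> = fls_residue (inverse (fps_to_fls (taylor_fps (\<lambda>s. f (fst P + s)) 0)))"
    unfolding \<rho> by (rule residue_inverse_eq_fls_residue[OF f(2,1)])
  also have "\<dots> = inverse_numer (\<lambda>i. L $ (\<nu> + i)) (\<nu> - 1) / (L $ \<nu>) ^ \<nu>"
    using fls_residue_inverse_conjugate[OF L(1) \<open>L \<noteq> 0\<close> h conj] by (simp only: sub)
  also have "inverse_numer (\<lambda>i. L $ (\<nu> + i)) (\<nu> - 1) = inverse_numer (log_coeff (slice_coeff g P) \<nu>) (\<nu> - 1)"
  proof (rule inverse_numer_cong)
    fix i assume "i \<le> \<nu> - 1"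
    then have "L $ (\<nu> + i) = log_coeff (fps_nth T) \<nu> i" using log \<nu>(1) by simp
    also have "\<dots> = log_coeff (slice_coeff g P) \<nu> i" using \<nu>(1) T by (intro log_coeff_cong) auto
    finally show "L $ (\<nu> + i) = log_coeff (slice_coeff g P) \<nu> i" .
  qed
  also have "L $ \<nu> = slice_coeff g P \<nu>"
    using log[of 0] \<nu>(1) T[of \<nu>] by (simp add: log_coeff_def)
  finally show ?thesis .
qed

lemma nu0_attained:
  assumes nu0: "nu0 g \<gamma> = enat \<nu>" and g0: "0 \<in> \<gamma>" and d: "d > 0"
  shows "\<exists>p\<in>\<gamma> \<inter> ball 0 d. nu g p = enat \<nu>"
proof -
  define I where "I d = (INF P\<in>\<gamma> \<inter> ball 0 d. nu g P)" for d :: real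
  have S: "Sup (I ` {0<..}) = enat \<nu>" using nu0 by (simp add: nu0_def I_def)
  have ne: "I ` {0<..} \<noteq> {}" by auto
  have fin: "finite (I ` {0<..})"
  proof (rule ccontr)
    assume "infinite (I ` {0<..})"
    then have "Sup (I ` {0<..}) = \<infinity>" using ne by (simp add: Sup_enat_def)
    then show False using S by simp
  qed
  have "Max (I ` {0<..}) = enat \<nu>" using S fin ne by (simp add: Sup_enat_def)
  then obtain d0 where d0: "d0 > 0" "I d0 = enat \<nu>" using Max_in[OF fin ne] by auto
  define d' where "d' = min d d0"
  have d': "d' > 0" using d d0 by (simp add: d'_def)
  have "I d0 \<le> I d'"
    unfolding I_def by (rule INF_superset_mono) (auto simp: d'_def)
  moreover have "I d' \<le> enat \<nu>" using S SUP_upper[of d' "{0<..}" I] d' by simp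
  ultimately have Id': "I d' = enat \<nu>" using d0 by simp
  have ne': "nu g ` (\<gamma> \<inter> ball 0 d') \<noteq> {}" using g0 d' by auto
  then have "I d' \<in> nu g ` (\<gamma> \<inter> ball 0 d')"
    unfolding I_def Inf_enat_def by (simp add: LeastI_ex[of "\<lambda>x. x \<in> nu g ` (\<gamma> \<inter> ball 0 d')"])
  then obtain p where "p \<in> \<gamma> \<inter> ball 0 d'" "nu g p = enat \<nu>" using Id' by auto
  then show ?thesis by (auto simp: d'_def)
qed

definition Res_meromorphic :: "(complex \<times> (complex^'n) \<Rightarrow> complex) \<Rightarrow> (complex \<times> (complex^'n)) set \<Rightarrow> bool"
  where "Res_meromorphic g \<gamma> \<longleftrightarrow> (\<exists>A B e. e > 0 \<and> cholo_on (ball 0 e) A \<and> cholo_on (ball 0 e) B \<and>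
           (\<forall>d>0. \<exists>p\<in>\<gamma> \<inter> ball 0 d. B p \<noteq> 0) \<and>
           (\<forall>P\<in>\<gamma> \<inter> ball 0 e. \<forall>\<rho>. Res_rel g \<gamma> P \<rho> \<and> B P \<noteq> 0 \<longrightarrow> \<rho> = A P / B P))"

lemma Res_meromorphicI:
  assumes "e > 0" "cholo_on (ball 0 e) A" "cholo_on (ball 0 e) B"
    and "\<And>d. d > 0 \<Longrightarrow> \<exists>p\<in>\<gamma> \<inter> ball 0 d. B p \<noteq> 0"
    and "\<And>P \<rho>. P \<in> \<gamma> \<inter> ball 0 e \<Longrightarrow> Res_rel g \<gamma> P \<rho> \<Longrightarrow> B P \<noteq> 0 \<Longrightarrow> \<rho> = A P / B P"
  shows "Res_meromorphic g \<gamma>"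
  unfolding Res_meromorphic_def using assms by blast

lemma Ln_holomorphic_on_ball_1: "Ln holomorphic_on ball 1 1"
proof (rule holomorphic_on_Ln)
  show "ball (1::complex) 1 \<inter> \<real>\<^sub>\<le>\<^sub>0 = {}"
  proof (rule ccontr)
    assume "ball (1::complex) 1 \<inter> \<real>\<^sub>\<le>\<^sub>0 \<noteq> {}"
    then obtain z :: complex where z: "z \<in> ball 1 1" "z \<in> \<real>\<^sub>\<le>\<^sub>0" by blast
    have "Re z \<le> 0" using z(2) by (auto simp: complex_nonpos_Reals_iff)
    moreover have "\<bar>Re (1 - z)\<bar> < 1"
      using z(1) abs_Re_le_cmod[of "1 - z"] by (simp add: dist_norm)
    ultimately show False by simp
  qed
qed

lemma Res_meromorphic_non_unipotent:
  assumes r: "r > 0" and g: "cholo_on (ball 0 r) g" and g'0: "partial_x g 0 = 1"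
    and non_unip: "\<not> unipotent_comp g \<gamma>"
  shows "Res_meromorphic g \<gamma>"
proof -
  have g': "cholo_on (ball 0 r) (partial_x g)" by (rule cholo_on_partial_x[OF g])
  then have "continuous_on (ball 0 r) (partial_x g)" by (rule cholo_on_imp_continuous_on)
  then have "isCont (partial_x g) 0" using r by (simp add: continuous_on_eq_continuous_at)
  then obtain e1 where e1: "e1 > 0" "\<And>P. dist P 0 < e1 \<Longrightarrow> dist (partial_x g P) 1 < 1"
    unfolding continuous_at_eps_delta g'0 using zero_less_one by blast
  define e where "e = min r e1"
  have near_1: "partial_x g P \<in> ball 1 1" if "P \<in> ball 0 e" for P
    using e1(2)[of P] that by (simp add: e_def dist_commute)
  have Ln_nz: "Ln (partial_x g P) \<noteq> 0" if "P \<in> ball 0 e" "partial_x g P \<noteq> 1" for P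
  proof
    assume "Ln (partial_x g P) = 0"
    moreover have "partial_x g P \<noteq> 0" using near_1[OF that(1)] by (auto simp: dist_norm)
    then have "partial_x g P = exp (Ln (partial_x g P))" by simp
    ultimately show False using that(2) by simp
  qed
  show ?thesis
  proof (rule Res_meromorphicI[where A="\<lambda>_. 1" and B="\<lambda>P. Ln (partial_x g P)"])
    show "e > 0" using r e1 by (simp add: e_def)
    show "cholo_on (ball 0 e) (\<lambda>_. 1)" by (simp add: cholo_on_const)
    show "cholo_on (ball 0 e) (\<lambda>P. Ln (partial_x g P))"
      by (rule cholo_on_compose_holomorphic[OF cholo_on_subset[OF g'] Ln_holomorphic_on_ball_1])
         (use near_1 in \<open>auto simp: e_def\<close>)
    fix d :: real assume "d > 0"
    then obtain Q where Q: "Q \<in> \<gamma> \<inter> ball 0 (min d e)" "partial_x g Q \<noteq> 1"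
      using non_unip \<open>e > 0\<close> unfolding unipotent_comp_def by (metis min_less_iff_conj)
    then have "Ln (partial_x g Q) \<noteq> 0" using Ln_nz[of Q] by simp
    then show "\<exists>p\<in>\<gamma> \<inter> ball 0 d. Ln (partial_x g p) \<noteq> 0"
      using Q(1) by (intro bexI[of _ Q]) auto
  next
    fix P \<rho> assume "Res_rel g \<gamma> P \<rho>"
    then show "\<rho> = 1 / Ln (partial_x g P)" using non_unip by (simp add: Res_rel_def)
  qed
qed

lemma Res_meromorphic_unipotent:
  assumes r: "r > 0" and g: "cholo_on (ball 0 r) g" and "0 \<in> \<gamma>"
    and eZ: "eZ > 0" and fixed: "\<And>P. P \<in> \<gamma> \<inter> ball 0 eZ \<Longrightarrow> g P = fst P"
    and unip: "unipotent_comp g \<gamma>"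
  shows "Res_meromorphic g \<gamma>"
proof (cases "nu0 g \<gamma>")
  case infinity
  show ?thesis
  proof (rule Res_meromorphicI[where A="\<lambda>_. 0" and B="\<lambda>_. 1"])
    show "\<exists>p\<in>\<gamma> \<inter> ball 0 d. (1::complex) \<noteq> 0" if "d > 0" for d
      using \<open>0 \<in> \<gamma>\<close> that by (intro bexI[of _ 0]) auto
    show "\<rho> = 0 / 1" if "Res_rel g \<gamma> P \<rho>" for P \<rho>
      using that unip infinity by (auto simp: Res_rel_def unip_res_def)
  qed (use r in \<open>auto intro: cholo_on_const\<close>)
next
  case (enat \<nu>)
  obtain eu where eu: "eu > 0" "\<And>Q. Q \<in> \<gamma> \<inter> ball 0 eu \<Longrightarrow> partial_x g Q = 1"
    using unip unfolding unipotent_comp_def by blast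
  define e where "e = min r (min eu eZ)"
  have e: "e > 0" using r eu eZ by (simp add: e_def)
  have ge: "cholo_on (ball 0 e) g" by (rule cholo_on_subset[OF g]) (auto simp: e_def)
  have on_\<gamma>: "P \<in> ball 0 e" "g P = fst P" "partial_x g P = 1" if "P \<in> \<gamma> \<inter> ball 0 e" for P
    using that fixed[of P] eu(2)[of P] by (auto simp: e_def)
  have coeff: "cholo_on (ball 0 e) (\<lambda>P. slice_coeff g P j)" for j
    by (rule cholo_on_slice_coeff[OF ge])
  show ?thesis
  proof (rule Res_meromorphicI[where A="\<lambda>P. inverse_numer (log_coeff (slice_coeff g P) \<nu>) (\<nu> - 1)"
                                   and B="\<lambda>P. slice_coeff g P \<nu> ^ \<nu>"])
    show "cholo_on (ball 0 e) (\<lambda>P. inverse_numer (log_coeff (slice_coeff g P) \<nu>) (\<nu> - 1))"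
      by (intro cholo_on_inverse_numer cholo_on_log_coeff coeff open_ball)
    show "cholo_on (ball 0 e) (\<lambda>P. slice_coeff g P \<nu> ^ \<nu>)"
      by (intro cholo_on_power coeff)
    fix d :: real assume "d > 0"
    then obtain p where p: "p \<in> \<gamma> \<inter> ball 0 (min d e)" "nu g p = enat \<nu>"
      using nu0_attained[OF enat \<open>0 \<in> \<gamma>\<close>, of "min d e"] e by auto
    then have "slice_coeff g p \<nu> \<noteq> 0"
      using nu_eq_enat_slice_coeff(2)[OF ge on_\<gamma>] by auto
    then show "\<exists>p\<in>\<gamma> \<inter> ball 0 d. slice_coeff g p \<nu> ^ \<nu> \<noteq> 0" using p by auto
  next
    fix P \<rho> assume P: "P \<in> \<gamma> \<inter> ball 0 e" and "Res_rel g \<gamma> P \<rho>"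
    then have "unip_res g \<gamma> P \<rho>" using unip by (simp add: Res_rel_def)
    moreover from this have "nu g P = enat \<nu>" using enat by (simp add: unip_res_def)
    ultimately show "\<rho> = inverse_numer (log_coeff (slice_coeff g P) \<nu>) (\<nu> - 1) / slice_coeff g P \<nu> ^ \<nu>"
      using unip_res_eq[OF ge on_\<gamma>[OF P]] by blast
  qed (rule e)
qed

theorem mainTheorem6:
  fixes g :: "complex \<times> (complex^'n) \<Rightarrow> complex" and r :: real
    and \<gamma> :: "(complex \<times> (complex^'n)) set"
  assumes "r > 0" and "cholo_on (ball 0 r) g" and "g 0 = 0" and "partial_x g 0 = 1"
    and "irreducible_component_germ \<gamma> {p \<in> ball 0 r. g p = fst p}"
    and "\<not> fibered_germ \<gamma>"
  shows "\<exists>A B e. e > 0 \<and> cholo_on (ball 0 e) A \<and> cholo_on (ball 0 e) B \<and>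
           (\<forall>d>0. \<exists>p\<in>\<gamma> \<inter> ball 0 d. B p \<noteq> 0) \<and>
           (\<forall>P\<in>\<gamma> \<inter> ball 0 e. \<forall>\<rho>. Res_rel g \<gamma> P \<rho> \<and> B P \<noteq> 0 \<longrightarrow> \<rho> = A P / B P)"
proof -
  obtain eZ where "eZ > 0" and "\<gamma> \<inter> ball 0 eZ \<subseteq> {p \<in> ball 0 r. g p = fst p}" and "0 \<in> \<gamma>"
    using assms(5) unfolding irreducible_component_germ_def irreducible_germ_def germ_sub_def by blast
  then have "Res_meromorphic g \<gamma>"
    using Res_meromorphic_unipotent[OF assms(1,2)] Res_meromorphic_non_unipotent[OF assms(1,2,4)]
    by blast
  then show ?thesis unfolding Res_meromorphic_def .
qed

end
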